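(* Let $R$ be a commutative unital ring with $\operatorname{sr}(R) \le 2$ and let $I$ be an ideal of $R$. Then the natural map $\operatorname{SK}_1(R) \to \operatorname{SK}_1(R/I)$ is surjective.
   Context: The Bass stable rank: a row $(r_1,\dots,r_n)\in R^n$ is unimodular if $\sum_i Rr_i=R$; a unimodular row $(r_1,\dots,r_{n+1})$ is stable if there exist $s_i\in R$ with $(r_1+s_1r_{n+1},\dots,r_n+s_nr_{n+1})$ unimodular; $\operatorname{sr}(R)$ is the least $n>0$ such that every unimodular row of length $n+1$ is stable. $\operatorname{E}_n(R)$ is the subgroup of $\operatorname{SL}_n(R)$ generated by elementary matrices $I_n + a\epsilon_{ij}$ ($a\in R$, $i\ne j$). $\operatorname{SL}(R)=\bigcup_n\operatorname{SL}_n(R)$ and $\operatorname{E}(R)=\bigcup_n\operatorname{E}_n(R)$ via the embeddings $A\mapsto\begin{pmatrix}A&0\\0&1\end{pmatrix}$; $\operatorname{E}(R)$ is normal in $\operatorname{SL}(R)$ and $\operatorname{SK}_1(R)=\operatorname{SL}(R)/\operatorname{E}(R)$. *)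

theory Defs
  imports "HOL-Algebra.Algebra" "HOL-Combinatorics.Permutations" "HOL-Library.Extended_Nat"
begin

text \<open>A row of length n is a function nat => 'a, only indices below n matter.
  It is unimodular if the sum of the principal ideals R r_i is R, i.e. 1 is an
  R-linear combination of the r_i.\<close>

definition unimodular :: "('a, 'b) ring_scheme \<Rightarrow> nat \<Rightarrow> (nat \<Rightarrow> 'a) \<Rightarrow> bool" where
  "unimodular R n r \<longleftrightarrow>
     (\<forall>i<n. r i \<in> carrier R) \<and>
     (\<exists>s. (\<forall>i<n. s i \<in> carrier R) \<and>
          finsum R (\<lambda>i. s i \<otimes>\<^bsub>R\<^esub> r i) {..<n} = \<one>\<^bsub>R\<^esub>)"

definition stable_row :: "('a, 'b) ring_scheme \<Rightarrow> nat \<Rightarrow> (nat \<Rightarrow> 'a) \<Rightarrow> bool" where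
  "stable_row R n r \<longleftrightarrow>
     (\<exists>s. (\<forall>i<n. s i \<in> carrier R) \<and>
          unimodular R n (\<lambda>i. r i \<oplus>\<^bsub>R\<^esub> s i \<otimes>\<^bsub>R\<^esub> r n))"

definition sr_cond :: "('a, 'b) ring_scheme \<Rightarrow> nat \<Rightarrow> bool" where
  "sr_cond R n \<longleftrightarrow> (\<forall>r. unimodular R (Suc n) r \<longrightarrow> stable_row R n r)"

definition sr :: "('a, 'b) ring_scheme \<Rightarrow> enat" where
  "sr R = (if \<exists>n>0. sr_cond R n then enat (LEAST n. n > 0 \<and> sr_cond R n) else \<infinity>)"

text \<open>An n x n matrix A is
  represented by the infinite matrix diag(A, 1, 1, ...); thus the embeddings
  SL_n(R) into SL_{n+1}(R), A |-> diag(A,1), become inclusions, and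
  SL(R) is literally the union of the SL_n(R).\<close>

definition idm :: "('a, 'b) ring_scheme \<Rightarrow> nat \<Rightarrow> nat \<Rightarrow> 'a" where
  "idm R i j = (if i = j then \<one>\<^bsub>R\<^esub> else \<zero>\<^bsub>R\<^esub>)"

definition is_mat :: "('a, 'b) ring_scheme \<Rightarrow> nat \<Rightarrow> (nat \<Rightarrow> nat \<Rightarrow> 'a) \<Rightarrow> bool" where
  "is_mat R n A \<longleftrightarrow> (\<forall>i j. A i j \<in> carrier R) \<and>
                     (\<forall>i j. (n \<le> i \<or> n \<le> j) \<longrightarrow> A i j = idm R i j)"

definition mat_mult :: "('a, 'b) ring_scheme \<Rightarrow> nat \<Rightarrow> (nat \<Rightarrow> nat \<Rightarrow> 'a) \<Rightarrow> (nat \<Rightarrow> nat \<Rightarrow> 'a) \<Rightarrow> nat \<Rightarrow> nat \<Rightarrow> 'a" where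
  "mat_mult R n A B i j =
     (if i < n \<and> j < n then finsum R (\<lambda>k. A i k \<otimes>\<^bsub>R\<^esub> B k j) {..<n} else idm R i j)"

definition det :: "('a, 'b) ring_scheme \<Rightarrow> nat \<Rightarrow> (nat \<Rightarrow> nat \<Rightarrow> 'a) \<Rightarrow> 'a" where
  "det R n A =
     finsum R (\<lambda>p. (if evenperm p then \<one>\<^bsub>R\<^esub> else \<ominus>\<^bsub>R\<^esub> \<one>\<^bsub>R\<^esub>) \<otimes>\<^bsub>R\<^esub>
                    finprod R (\<lambda>i. A i (p i)) {..<n})
       {p. p permutes {..<n}}"

definition SL :: "('a, 'b) ring_scheme \<Rightarrow> nat \<Rightarrow> (nat \<Rightarrow> nat \<Rightarrow> 'a) set" where
  "SL R n = {A. is_mat R n A \<and> det R n A = \<one>\<^bsub>R\<^esub>}"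

definition SL_grp :: "('a, 'b) ring_scheme \<Rightarrow> nat \<Rightarrow> (nat \<Rightarrow> nat \<Rightarrow> 'a) monoid" where
  "SL_grp R n = \<lparr>carrier = SL R n, monoid.mult = mat_mult R n, one = idm R\<rparr>"

definition elem :: "('a, 'b) ring_scheme \<Rightarrow> nat \<Rightarrow> nat \<Rightarrow> 'a \<Rightarrow> nat \<Rightarrow> nat \<Rightarrow> 'a" where
  "elem R i j a k l = (if k = i \<and> l = j then idm R k l \<oplus>\<^bsub>R\<^esub> a else idm R k l)"

definition E :: "('a, 'b) ring_scheme \<Rightarrow> nat \<Rightarrow> (nat \<Rightarrow> nat \<Rightarrow> 'a) set" where
  "E R n = generate (SL_grp R n)
             {elem R i j a | i j a. i < n \<and> j < n \<and> i \<noteq> j \<and> a \<in> carrier R}"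

definition SL_all :: "('a, 'b) ring_scheme \<Rightarrow> (nat \<Rightarrow> nat \<Rightarrow> 'a) set" where
  "SL_all R = (\<Union>n. SL R n)"

definition E_all :: "('a, 'b) ring_scheme \<Rightarrow> (nat \<Rightarrow> nat \<Rightarrow> 'a) set" where
  "E_all R = (\<Union>n. E R n)"

text \<open>Product in SL(R): multiply in SL_n(R) for any n containing both matrices
  (the result does not depend on the choice of such n); we take the least one.\<close>

definition stab_mult :: "('a, 'b) ring_scheme \<Rightarrow> (nat \<Rightarrow> nat \<Rightarrow> 'a) \<Rightarrow> (nat \<Rightarrow> nat \<Rightarrow> 'a) \<Rightarrow> nat \<Rightarrow> nat \<Rightarrow> 'a" where
  "stab_mult R A B = mat_mult R (LEAST n. A \<in> SL R n \<and> B \<in> SL R n) A B"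

definition SL_stab :: "('a, 'b) ring_scheme \<Rightarrow> (nat \<Rightarrow> nat \<Rightarrow> 'a) monoid" where
  "SL_stab R = \<lparr>carrier = SL_all R, monoid.mult = stab_mult R, one = idm R\<rparr>"

definition SK1 :: "('a, 'b) ring_scheme \<Rightarrow> (nat \<Rightarrow> nat \<Rightarrow> 'a) set monoid" where
  "SK1 R = SL_stab R Mod E_all R"

definition reduce :: "('a, 'b) ring_scheme \<Rightarrow> 'a set \<Rightarrow> (nat \<Rightarrow> nat \<Rightarrow> 'a) \<Rightarrow> nat \<Rightarrow> nat \<Rightarrow> 'a set" where
  "reduce R I A i j = I +>\<^bsub>R\<^esub> A i j"

definition SK1_map :: "('a, 'b) ring_scheme \<Rightarrow> 'a set \<Rightarrow> (nat \<Rightarrow> nat \<Rightarrow> 'a) set \<Rightarrow> (nat \<Rightarrow> nat \<Rightarrow> 'a set) set" where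
  "SK1_map R I C = r_coset (SL_stab (FactRing R I)) (E_all (FactRing R I)) (reduce R I (SOME A. A \<in> C))"

end

theory Submission
  imports Defs
begin

text \<open>
  Every \<open>b \<in> SL\<^sub>m(R/I)\<close> is row equivalent, by elementary matrices over \<open>R/I\<close>, to the
  reduction of some \<open>A \<in> SL\<^sub>m(R)\<close>; so the class of \<open>b\<close> in \<open>SK\<^sub>1(R/I)\<close> is the image of the
  class of \<open>A\<close>. This is shown by induction on \<open>m\<close>, using that the stable range condition
  \<open>sr \<le> 2\<close> passes from \<open>R\<close> to \<open>R/I\<close>.
  For \<open>m \<ge> 3\<close> the last column of \<open>b\<close> is unimodular; stable range lets row operations shorten it
  to two entries and then turn it into the last unit vector. The upper left block is handled
  by induction and the last row is lifted arbitrarily.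
  For \<open>m = 2\<close> the second row of \<open>b\<close> is unimodular and, by stable range in \<open>R\<close>, lifts to a
  unimodular row \<open>(c, d)\<close> of \<open>R\<close>. If \<open>p c + q d = 1\<close>, the matrix with rows \<open>(q, -p)\<close> and
  \<open>(c, d)\<close> lies in \<open>SL\<^sub>2(R)\<close>, and its reduction differs from \<open>b\<close> by a single elementary
  matrix.
\<close>

context cring
begin

lemma idm_closed [simp]: "idm R i j \<in> carrier R"
  by (simp add: idm_def)

lemma is_mat_idm [simp]: "is_mat R n (idm R)"
  by (simp add: is_mat_def)

lemma is_mat_closed [simp]: "is_mat R n A \<Longrightarrow> A i j \<in> carrier R"
  by (simp add: is_mat_def)

lemma is_mat_row_outside: "is_mat R n A \<Longrightarrow> n \<le> i \<Longrightarrow> A i j = idm R i j"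
  by (simp add: is_mat_def)

lemma is_mat_col_outside: "is_mat R n A \<Longrightarrow> n \<le> j \<Longrightarrow> A i j = idm R i j"
  by (simp add: is_mat_def)

lemma finsum_lessThan_Suc:
  assumes "\<And>i. i \<le> n \<Longrightarrow> f i \<in> carrier R"
  shows "(\<Oplus>i\<in>{..<Suc n}. f i) = f n \<oplus> (\<Oplus>i\<in>{..<n}. f i)"
  using assms by (simp add: lessThan_Suc finsum_insert Pi_def)

lemma finsum_lessThan_cong:
  "(\<And>i. i < n \<Longrightarrow> f i = g i) \<Longrightarrow> (\<And>i. i < n \<Longrightarrow> g i \<in> carrier R) \<Longrightarrow>
    (\<Oplus>i\<in>{..<n}. f i) = (\<Oplus>i\<in>{..<n}. g i)"
  by (intro finsum_cong') auto

lemma finsum_lessThan_2: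
  assumes "f 0 \<in> carrier R" "f 1 \<in> carrier R"
  shows "(\<Oplus>i\<in>{..<2::nat}. f i) = f 0 \<oplus> f 1"
proof -
  have "{..<2::nat} = insert 0 {1}"
    by auto
  then show ?thesis
    using assms by (simp add: finsum_insert)
qed

lemma finsum_idm_left:
  assumes "i < n" "\<And>k. f k \<in> carrier R"
  shows "(\<Oplus>k\<in>{..<n}. idm R i k \<otimes> f k) = f i"
proof -
  have "(\<Oplus>k\<in>{..<n}. idm R i k \<otimes> f k) = (\<Oplus>k\<in>{..<n}. if i = k then f k else \<zero>)"
    by (rule finsum_cong') (auto simp: idm_def assms)
  also have "\<dots> = f i"
    using assms by (intro finsum_singleton) auto
  finally show ?thesis .
qed

lemma finsum_idm_right:
  assumes "j < n" "\<And>k. f k \<in> carrier R"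
  shows "(\<Oplus>k\<in>{..<n}. f k \<otimes> idm R k j) = f j"
proof -
  have "(\<Oplus>k\<in>{..<n}. f k \<otimes> idm R k j) = (\<Oplus>k\<in>{..<n}. if j = k then f k else \<zero>)"
    by (rule finsum_cong') (auto simp: idm_def assms)
  also have "\<dots> = f j"
    using assms by (intro finsum_singleton) auto
  finally show ?thesis .
qed

lemma finsum_swap:
  assumes "finite A" "finite B" "\<And>i j. f i j \<in> carrier R"
  shows "(\<Oplus>i\<in>A. \<Oplus>j\<in>B. f i j) = (\<Oplus>j\<in>B. \<Oplus>i\<in>A. f i j)"
  using assms(1)
proof (induction A rule: finite_induct)
  case empty
  then show ?case by (simp add: finsum_zero)
next
  case (insert a A)
  then show ?case
    using assms(2,3) by (simp add: finsum_insert finsum_addf Pi_def finsum_closed)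
qed

lemma is_mat_mat_mult [simp]:
  "is_mat R n A \<Longrightarrow> is_mat R n B \<Longrightarrow> is_mat R n (mat_mult R n A B)"
  by (auto simp: is_mat_def mat_mult_def intro!: finsum_closed)

lemma mat_mult_outside: "\<not> (i < n \<and> j < n) \<Longrightarrow> mat_mult R n A B i j = idm R i j"
  by (auto simp: mat_mult_def)

lemma mat_mult_inside:
  "i < n \<Longrightarrow> j < n \<Longrightarrow> mat_mult R n A B i j = (\<Oplus>k\<in>{..<n}. A i k \<otimes> B k j)"
  by (simp add: mat_mult_def)

lemma mat_mult_idm_left [simp]: "is_mat R n A \<Longrightarrow> mat_mult R n (idm R) A = A"
  by (intro ext) (auto simp: mat_mult_def finsum_idm_left is_mat_def)

lemma mat_mult_idm_right [simp]: "is_mat R n A \<Longrightarrow> mat_mult R n A (idm R) = A"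
  by (intro ext) (auto simp: mat_mult_def finsum_idm_right is_mat_def)

lemma mat_mult_size_indep:
  assumes A: "is_mat R n A" and B: "is_mat R n B" and "n \<le> m"
  shows "mat_mult R m A B = mat_mult R n A B"
proof (intro ext)
  fix i j
  consider "i < n" "j < n" | "n \<le> i" "i < m" "j < m" | "n \<le> j" "i < m" "j < m"
    | "\<not> (i < m \<and> j < m)"
    by linarith
  then show "mat_mult R m A B i j = mat_mult R n A B i j"
  proof cases
    case 1
    have "(\<Oplus>k\<in>{..<m}. A i k \<otimes> B k j) = (\<Oplus>k\<in>{..<n}. A i k \<otimes> B k j)"
      using 1 A B \<open>n \<le> m\<close>
      by (intro add.finprod_mono_neutral_cong_right) (auto simp: is_mat_col_outside[OF A] idm_def)
    then show ?thesis using 1 \<open>n \<le> m\<close> by (simp add: mat_mult_inside)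
  next
    case 2
    then show ?thesis using A B
      by (simp add: mat_mult_inside mat_mult_outside is_mat_row_outside[OF A] is_mat_row_outside[OF B]
          finsum_idm_left)
  next
    case 3
    then show ?thesis using A B
      by (simp add: mat_mult_inside mat_mult_outside is_mat_col_outside[OF A] is_mat_col_outside[OF B]
          finsum_idm_right)
  next
    case 4
    then have "\<not> (i < n \<and> j < n)" using \<open>n \<le> m\<close> by auto
    then show ?thesis using 4 by (simp add: mat_mult_outside)
  qed
qed

lemma mat_mult_assoc:
  assumes A: "is_mat R n A" and B: "is_mat R n B" and C: "is_mat R n C"
  shows "mat_mult R n (mat_mult R n A B) C = mat_mult R n A (mat_mult R n B C)"
proof (intro ext)
  fix i j
  show "mat_mult R n (mat_mult R n A B) C i j = mat_mult R n A (mat_mult R n B C) i j"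
  proof (cases "i < n \<and> j < n")
    case True
    have "(\<Oplus>k\<in>{..<n}. mat_mult R n A B i k \<otimes> C k j)
        = (\<Oplus>k\<in>{..<n}. \<Oplus>l\<in>{..<n}. A i l \<otimes> B l k \<otimes> C k j)"
      using True A B C by (intro finsum_cong') (auto simp: mat_mult_def finsum_ldistr Pi_def)
    also have "\<dots> = (\<Oplus>l\<in>{..<n}. \<Oplus>k\<in>{..<n}. A i l \<otimes> B l k \<otimes> C k j)"
      using A B C by (intro finsum_swap) auto
    also have "\<dots> = (\<Oplus>l\<in>{..<n}. A i l \<otimes> mat_mult R n B C l j)"
      using True A B C by (intro finsum_cong') (auto simp: mat_mult_def finsum_rdistr Pi_def m_assoc)
    finally show ?thesis using True by (simp add: mat_mult_inside)
  qed (simp add: mat_mult_outside)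
qed

lemma mat_mult_Suc_upper_rows:
  assumes e: "is_mat R n e" and B: "\<And>k l. B k l \<in> carrier R" and "i < n" "j < Suc n"
  shows "mat_mult R (Suc n) e B i j = (\<Oplus>k\<in>{..<n}. e i k \<otimes> B k j)"
proof -
  have "e i n = \<zero>"
    using is_mat_col_outside[OF e, of n i] \<open>i < n\<close> by (simp add: idm_def)
  then show ?thesis
    using assms by (simp add: mat_mult_inside finsum_lessThan_Suc Pi_def finsum_closed)
qed

lemma mat_mult_Suc_last_row:
  assumes e: "is_mat R n e" and B: "\<And>k l. B k l \<in> carrier R" and "j < Suc n"
  shows "mat_mult R (Suc n) e B n j = B n j"
  using assms by (simp add: mat_mult_inside is_mat_row_outside[OF e] finsum_idm_left)

lemma is_mat_elem [simp]: "i < n \<Longrightarrow> j < n \<Longrightarrow> a \<in> carrier R \<Longrightarrow> is_mat R n (elem R i j a)"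
  by (auto simp: is_mat_def elem_def)

lemma elem_mat_mult:
  assumes M: "is_mat R n M" and "i < n" "j < n" "i \<noteq> j" and a: "a \<in> carrier R"
  shows "mat_mult R n (elem R i j a) M = (\<lambda>k l. if k = i \<and> l < n then M i l \<oplus> a \<otimes> M j l else M k l)"
proof (intro ext)
  fix k l
  show "mat_mult R n (elem R i j a) M k l = (if k = i \<and> l < n then M i l \<oplus> a \<otimes> M j l else M k l)"
  proof (cases "k < n \<and> l < n")
    case True
    have "(\<Oplus>t\<in>{..<n}. elem R i j a k t \<otimes> M t l)
        = (\<Oplus>t\<in>{..<n}. idm R k t \<otimes> M t l \<oplus> (if k = i \<and> j = t then a \<otimes> M t l else \<zero>))"
      using M a assms(2-4) by (intro finsum_cong') (auto simp: elem_def idm_def l_distr)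
    also have "\<dots> = M k l \<oplus> (\<Oplus>t\<in>{..<n}. if k = i \<and> j = t then a \<otimes> M t l else \<zero>)"
      using M a True by (simp add: finsum_addf Pi_def finsum_idm_left)
    also have "\<dots> = (if k = i \<and> l < n then M i l \<oplus> a \<otimes> M j l else M k l)"
      using M a True \<open>j < n\<close> by (auto simp: finsum_singleton finsum_zero)
    finally show ?thesis using True by (simp add: mat_mult_inside)
  next
    case False
    then show ?thesis using M \<open>i < n\<close> by (auto simp: mat_mult_outside is_mat_def)
  qed
qed

lemma elem_inverse:
  assumes "i < n" "j < n" "i \<noteq> j" "a \<in> carrier R"
  shows "mat_mult R n (elem R i j (\<ominus> a)) (elem R i j a) = idm R"
  unfolding elem_mat_mult[OF is_mat_elem[OF assms(1,2,4)] assms(1-3) a_inv_closed[OF assms(4)]]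
  using assms by (intro ext) (auto simp: elem_def idm_def r_neg)

end

section \<open>Determinants\<close>

context cring
begin

definition perm_sign :: "(nat \<Rightarrow> nat) \<Rightarrow> 'a" where
  "perm_sign p = (if evenperm p then \<one> else \<ominus> \<one>)"

lemma perm_sign_closed [simp]: "perm_sign p \<in> carrier R"
  by (simp add: perm_sign_def)

lemma det_perm_sign:
  "det R n A = (\<Oplus>p\<in>{p. p permutes {..<n}}. perm_sign p \<otimes> (\<Otimes>i\<in>{..<n}. A i (p i)))"
  by (simp add: det_def perm_sign_def)

lemma permutes_lessThanD: "p permutes {..<n} \<Longrightarrow> i < n \<Longrightarrow> p i < n"
  using permutes_in_image[of p "{..<n}" i] by simp

lemma det_closed [simp]: "(\<And>i j. A i j \<in> carrier R) \<Longrightarrow> det R n A \<in> carrier R"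
  by (simp add: det_perm_sign Pi_def finsum_closed finprod_closed)

lemma det_cong:
  assumes "\<And>i j. i < n \<Longrightarrow> j < n \<Longrightarrow> A i j = B i j" and "\<And>i j. B i j \<in> carrier R"
  shows "det R n A = det R n B"
  unfolding det_perm_sign
proof (rule finsum_cong')
  fix p assume "p \<in> {p. p permutes {..<n}}"
  then have "(\<Otimes>i\<in>{..<n}. A i (p i)) = (\<Otimes>i\<in>{..<n}. B i (p i))"
    using assms permutes_lessThanD[of p n] by (intro finprod_cong') auto
  then show "perm_sign p \<otimes> (\<Otimes>i\<in>{..<n}. A i (p i)) = perm_sign p \<otimes> (\<Otimes>i\<in>{..<n}. B i (p i))"
    by simp
qed (use assms in \<open>auto simp: Pi_def\<close>)

lemma finprod_remove:
  assumes "finite A" "i \<in> A" "f \<in> A \<rightarrow> carrier R"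
  shows "finprod R f A = f i \<otimes> finprod R f (A - {i})"
  using assms finprod_insert[of "A - {i}" i f] by (simp add: insert_absorb Pi_def)

lemma det_Suc_unit_last_col:
  assumes M: "\<And>i j. M i j \<in> carrier R" and "\<And>i. i < n \<Longrightarrow> M i n = \<zero>" and "M n n = \<one>"
  shows "det R (Suc n) M = det R n M"
proof -
  let ?t = "\<lambda>m p. perm_sign p \<otimes> (\<Otimes>i\<in>{..<m}. M i (p i))"
  have "?t (Suc n) p = \<zero>" if p: "p permutes {..<Suc n}" "\<not> p permutes {..<n}" for p
  proof -
    have "p n \<noteq> n"
      using p permutes_insert_lemma[of p n "{..<n}"] by (auto simp: lessThan_Suc)
    then have "inv_into UNIV p n \<noteq> n"
      by (metis p(1) permutes_inverses(1))
    moreover have "inv_into UNIV p n < Suc n"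
      using permutes_lessThanD[OF permutes_inv[OF p(1)]] by simp
    ultimately have "M (inv_into UNIV p n) (p (inv_into UNIV p n)) = \<zero>"
      using assms(2) permutes_inverses(1)[OF p(1)] by simp
    moreover have "inv_into UNIV p n \<in> {..<Suc n}" using \<open>inv_into UNIV p n < Suc n\<close> by simp
    ultimately show ?thesis
      using finprod_remove[of "{..<Suc n}" "inv_into UNIV p n" "\<lambda>i. M i (p i)"] M
      by (simp add: Pi_def finprod_closed)
  qed
  then have "det R (Suc n) M = (\<Oplus>p\<in>{p. p permutes {..<n}}. ?t (Suc n) p)"
    unfolding det_perm_sign using M
    by (intro add.finprod_mono_neutral_cong_right)
      (auto simp: finite_permutations Pi_def finprod_closed intro: permutes_subset)
  also have "\<dots> = (\<Oplus>p\<in>{p. p permutes {..<n}}. ?t n p)"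
  proof (rule finsum_cong')
    fix p assume "p \<in> {p. p permutes {..<n}}"
    then have "p n = n" using permutes_not_in by fastforce
    then show "?t (Suc n) p = ?t n p"
      using M assms(3) by (simp add: lessThan_Suc finprod_insert Pi_def finprod_closed)
  qed (use M in \<open>auto simp: Pi_def finprod_closed\<close>)
  finally show ?thesis by (simp add: det_perm_sign)
qed

lemma det_0: "det R 0 A = \<one>"
  by (simp add: det_perm_sign perm_sign_def)

lemma det_idm [simp]: "det R n (idm R) = \<one>"
proof (induction n)
  case (Suc n)
  have "det R (Suc n) (idm R) = det R n (idm R)"
    by (rule det_Suc_unit_last_col) (auto simp: idm_def)
  then show ?case using Suc by simp
qed (rule det_0)

lemma finprod_comp_transpose_equal_rows:
  fixes B :: "nat \<Rightarrow> nat \<Rightarrow> 'a" and p :: "nat \<Rightarrow> nat"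
  assumes B: "\<And>k l. B k l \<in> carrier R" and "i < n" "j < n" and rows: "B i = B j"
  shows "(\<Otimes>k\<in>{..<n}. B k (p (transpose i j k))) = (\<Otimes>k\<in>{..<n}. B k (p k))"
proof -
  let ?\<tau> = "transpose i j"
  have rows_\<tau>: "B (?\<tau> k) = B k" for k
    using rows by (simp add: transpose_def)
  have "(\<Otimes>k\<in>{..<n}. B k (p (?\<tau> k))) = (\<Otimes>k\<in>{..<n}. B (?\<tau> (?\<tau> k)) (p (?\<tau> k)))"
    using B by (intro finprod_cong') (auto simp: Pi_def)
  also have "\<dots> = (\<Otimes>k\<in>?\<tau> ` {..<n}. B (?\<tau> k) (p k))"
    using B by (intro finprod_reindex[symmetric]) (auto simp: Pi_def)
  also have "?\<tau> ` {..<n} = {..<n}"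
    using assms(2,3) by (intro permutes_image permutes_swap_id) auto
  finally show ?thesis by (simp add: rows_\<tau>)
qed

lemma finsum_Un_sign_reversing:
  assumes "finite A" "finite B" "A \<inter> B = {}" "bij_betw \<phi> A B"
    and f: "\<And>x. f x \<in> carrier R" and "\<And>x. x \<in> A \<Longrightarrow> f (\<phi> x) = \<ominus> f x"
  shows "finsum R f (A \<union> B) = \<zero>"
proof -
  have "finsum R f B = (\<Oplus>x\<in>A. f (\<phi> x))"
    using assms(4) f unfolding bij_betw_def by (metis Pi_I finsum_reindex)
  also have "\<dots> = (\<Oplus>x\<in>A. \<ominus> f x)"
    using assms(6) f by (intro finsum_cong') auto
  finally have "finsum R f (A \<union> B) = (\<Oplus>x\<in>A. f x \<oplus> \<ominus> f x)"
    using assms(1-3) f by (simp add: finsum_Un_disjoint finsum_addf Pi_def)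
  then show ?thesis
    using f by (simp add: r_neg finsum_zero)
qed

lemma det_equal_rows:
  assumes B: "\<And>k l. B k l \<in> carrier R" and "i < n" "j < n" "i \<noteq> j"
    and rows: "B i = B j"
  shows "det R n B = \<zero>"
proof -
  let ?\<tau> = "transpose i j"
  define f where "f = (\<lambda>p. perm_sign p \<otimes> (\<Otimes>k\<in>{..<n}. B k (p k)))"
  define Pe where "Pe = {p. p permutes {..<n} \<and> evenperm p}"
  define Po where "Po = {p. p permutes {..<n} \<and> \<not> evenperm p}"
  have \<tau>: "?\<tau> permutes {..<n}" "\<not> evenperm ?\<tau>"
    using assms(2-4) by (auto simp: permutes_swap_id evenperm_swap)
  have odd_\<tau>: "p \<circ> ?\<tau> permutes {..<n} \<and> evenperm (p \<circ> ?\<tau>) = (\<not> evenperm p)"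
    if "p permutes {..<n}" for p
  proof -
    have "permutation p" "permutation ?\<tau>"
      using that \<tau>(1) by (auto intro: permutes_imp_permutation)
    then show ?thesis
      using \<tau> permutes_compose[OF \<tau>(1) that] by (simp add: evenperm_comp)
  qed
  have f_\<tau>: "f (p \<circ> ?\<tau>) = \<ominus> f p" if "p permutes {..<n}" for p
  proof -
    have "perm_sign (p \<circ> ?\<tau>) = \<ominus> perm_sign p"
      using odd_\<tau>[OF that] by (simp add: perm_sign_def)
    moreover have "(\<Otimes>k\<in>{..<n}. B k ((p \<circ> ?\<tau>) k)) = (\<Otimes>k\<in>{..<n}. B k (p k))"
      using finprod_comp_transpose_equal_rows[OF B assms(2,3) rows, of p] by simp
    ultimately show ?thesis
      using B by (simp add: f_def l_minus Pi_def finprod_closed)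
  qed
  have bij: "bij_betw (\<lambda>p. p \<circ> ?\<tau>) Pe Po"
  proof (rule bij_betw_byWitness[where f' = "\<lambda>p. p \<circ> ?\<tau>"])
    show "(\<lambda>p. p \<circ> ?\<tau>) ` Pe \<subseteq> Po" "(\<lambda>p. p \<circ> ?\<tau>) ` Po \<subseteq> Pe"
      using odd_\<tau> by (auto simp: Pe_def Po_def)
  qed (simp_all add: comp_assoc)
  have "{p. p permutes {..<n}} = Pe \<union> Po"
    by (auto simp: Pe_def Po_def)
  then have "det R n B = finsum R f (Pe \<union> Po)"
    by (simp add: det_perm_sign f_def)
  also have "\<dots> = \<zero>"
    using B f_\<tau> bij by (intro finsum_Un_sign_reversing)
      (auto simp: Pe_def Po_def finite_permutations f_def Pi_def finprod_closed)
  finally show ?thesis .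
qed

lemma det_row_add:
  assumes A: "\<And>k l. A k l \<in> carrier R" and "i < n" and a: "a \<in> carrier R"
  shows "det R n (\<lambda>k l. if k = i \<and> l < n then A i l \<oplus> a \<otimes> A j l else A k l)
       = det R n A \<oplus> a \<otimes> det R n (\<lambda>k l. if k = i then A j l else A k l)"
proof -
  let ?Y = "\<lambda>k l. if k = i \<and> l < n then A i l \<oplus> a \<otimes> A j l else A k l"
  let ?A' = "\<lambda>k l. if k = i then A j l else A k l"
  let ?P = "\<lambda>B p. \<Otimes>k\<in>{..<n} - {i}. B k (p k)"
  have summand: "perm_sign p \<otimes> (\<Otimes>k\<in>{..<n}. ?Y k (p k)) =
      perm_sign p \<otimes> (\<Otimes>k\<in>{..<n}. A k (p k)) \<oplus> a \<otimes> (perm_sign p \<otimes> (\<Otimes>k\<in>{..<n}. ?A' k (p k)))"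
    if p: "p permutes {..<n}" for p
  proof -
    have split: "(\<Otimes>k\<in>{..<n}. B k (p k)) = B i (p i) \<otimes> ?P B p"
      if "\<And>k l. B k l \<in> carrier R" for B
      using that \<open>i < n\<close> by (intro finprod_remove) (auto simp: Pi_def)
    have "?P ?Y p = ?P A p" "?P ?A' p = ?P A p"
      using A by (intro finprod_cong'; simp add: Pi_def)+
    moreover have "?Y i (p i) = A i (p i) \<oplus> a \<otimes> A j (p i)"
      using permutes_lessThanD[OF p \<open>i < n\<close>] by simp
    moreover have "\<And>s x y Q. \<lbrakk>s \<in> carrier R; x \<in> carrier R; y \<in> carrier R; Q \<in> carrier R\<rbrakk> \<Longrightarrow>
        s \<otimes> ((x \<oplus> a \<otimes> y) \<otimes> Q) = s \<otimes> (x \<otimes> Q) \<oplus> a \<otimes> (s \<otimes> (y \<otimes> Q))"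
      using a by algebra
    ultimately show ?thesis
      using A a split[of ?Y] split[of A] split[of ?A'] by (simp add: Pi_def finprod_closed)
  qed
  have "det R n ?Y = (\<Oplus>p\<in>{p. p permutes {..<n}}.
      perm_sign p \<otimes> (\<Otimes>k\<in>{..<n}. A k (p k)) \<oplus> a \<otimes> (perm_sign p \<otimes> (\<Otimes>k\<in>{..<n}. ?A' k (p k))))"
    unfolding det_perm_sign using summand A a by (intro finsum_cong') (auto simp: Pi_def finprod_closed)
  also have "\<dots> = det R n A \<oplus> (\<Oplus>p\<in>{p. p permutes {..<n}}.
      a \<otimes> (perm_sign p \<otimes> (\<Otimes>k\<in>{..<n}. ?A' k (p k))))"
    unfolding det_perm_sign using A a by (intro finsum_addf) (auto simp: Pi_def finprod_closed)
  also have "(\<Oplus>p\<in>{p. p permutes {..<n}}. a \<otimes> (perm_sign p \<otimes> (\<Otimes>k\<in>{..<n}. ?A' k (p k))))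
      = a \<otimes> det R n ?A'"
    unfolding det_perm_sign using A a
    by (intro finsum_rdistr[symmetric]) (auto simp: Pi_def finprod_closed finite_permutations)
  finally show ?thesis .
qed

lemma det_elem_mat_mult:
  assumes M: "is_mat R n M" and "i < n" "j < n" "i \<noteq> j" and a: "a \<in> carrier R"
  shows "det R n (mat_mult R n (elem R i j a) M) = det R n M"
proof -
  have "det R n (mat_mult R n (elem R i j a) M)
      = det R n M \<oplus> a \<otimes> det R n (\<lambda>k l. if k = i then M j l else M k l)"
    unfolding elem_mat_mult[OF assms] using M assms(2) a by (intro det_row_add) auto
  also have "det R n (\<lambda>k l. if k = i then M j l else M k l) = \<zero>"
    using M assms(2-4) by (intro det_equal_rows[where i = i and j = j]) (auto simp: fun_eq_iff)
  finally show ?thesis using M a by simp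
qed

lemma finsum_lin_comb:
  assumes "finite P" "finite K" "\<And>k. v k \<in> carrier R"
    and "\<And>p. p \<in> P \<Longrightarrow> \<exists>s. (\<forall>k. s k \<in> carrier R) \<and> f p = (\<Oplus>k\<in>K. s k \<otimes> v k)"
  shows "\<exists>s. (\<forall>k. s k \<in> carrier R) \<and> finsum R f P = (\<Oplus>k\<in>K. s k \<otimes> v k)"
  using assms(1,4)
proof (induction P rule: finite_induct)
  case empty
  show ?case
    using assms(3) by (intro exI[of _ "\<lambda>_. \<zero>"]) (simp add: finsum_zero)
next
  case (insert p P)
  obtain s where s: "\<forall>k. s k \<in> carrier R" "f p = (\<Oplus>k\<in>K. s k \<otimes> v k)"
    using insert.prems by blast
  obtain t where t: "\<forall>k. t k \<in> carrier R" "finsum R f P = (\<Oplus>k\<in>K. t k \<otimes> v k)"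
    using insert by blast
  have "f \<in> insert p P \<rightarrow> carrier R"
    using insert.prems assms(3) by (fastforce intro!: finsum_closed)
  then have "finsum R f (insert p P) = f p \<oplus> finsum R f P"
    using insert.hyps by (intro finsum_insert) auto
  also have "\<dots> = (\<Oplus>k\<in>K. s k \<otimes> v k) \<oplus> (\<Oplus>k\<in>K. t k \<otimes> v k)"
    using s(2) t(2) by simp
  also have "\<dots> = (\<Oplus>k\<in>K. (s k \<oplus> t k) \<otimes> v k)"
    using s t assms(3) by (simp add: finsum_addf l_distr Pi_def)
  finally show ?case
    using s t by (intro exI[of _ "\<lambda>k. s k \<oplus> t k"]) simp
qed

lemma det_last_col_lin_comb:
  assumes A: "\<And>i j. A i j \<in> carrier R"
  shows "\<exists>s. (\<forall>i. s i \<in> carrier R) \<and> det R (Suc n) A = (\<Oplus>i\<in>{..<Suc n}. s i \<otimes> A i n)"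
  unfolding det_perm_sign
proof (rule finsum_lin_comb)
  fix p assume "p \<in> {p. p permutes {..<Suc n}}"
  then have p: "p permutes {..<Suc n}" by simp
  define k where "k = inv_into UNIV p n"
  have k: "k < Suc n" "p k = n"
    using permutes_lessThanD[OF permutes_inv[OF p]] permutes_inverses(1)[OF p] by (auto simp: k_def)
  define c where "c = perm_sign p \<otimes> (\<Otimes>i\<in>{..<Suc n} - {k}. A i (p i))"
  have c: "c \<in> carrier R"
    using A by (simp add: c_def Pi_def finprod_closed)
  have "perm_sign p \<otimes> (\<Otimes>i\<in>{..<Suc n}. A i (p i)) = c \<otimes> A k n"
    using finprod_remove[of "{..<Suc n}" k "\<lambda>i. A i (p i)"] A k c
    by (simp add: c_def Pi_def finprod_closed m_ac)
  also have "\<dots> = (\<Oplus>i\<in>{..<Suc n}. if k = i then c \<otimes> A i n else \<zero>)"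
    using A c k by (intro finsum_singleton[symmetric]) auto
  also have "\<dots> = (\<Oplus>i\<in>{..<Suc n}. (if i = k then c else \<zero>) \<otimes> A i n)"
    using A c by (intro finsum_cong') auto
  finally show "\<exists>s. (\<forall>i. s i \<in> carrier R) \<and>
      perm_sign p \<otimes> (\<Otimes>i\<in>{..<Suc n}. A i (p i)) = (\<Oplus>i\<in>{..<Suc n}. s i \<otimes> A i n)"
    using c by (intro exI[of _ "\<lambda>i. if i = k then c else \<zero>"]) simp
qed (use A in \<open>simp_all add: finite_permutations\<close>)

lemma det_1:
  assumes "\<And>i j. A i j \<in> carrier R"
  shows "det R 1 A = A 0 0"
proof -
  have "{..<1::nat} = {0}" by auto
  then show ?thesis
    using assms by (simp add: det_perm_sign perm_sign_def)
qed

lemma SL_le_1: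
  assumes "m \<le> 1" and A: "A \<in> SL R m"
  shows "A = idm R"
proof (intro ext)
  fix i j
  have "is_mat R m A" and "m = 1 \<Longrightarrow> A 0 0 = \<one>"
    using A det_1[of A] by (auto simp: SL_def)
  then show "A i j = idm R i j"
    using \<open>m \<le> 1\<close> unfolding is_mat_def by (cases "m = 1 \<and> i = 0 \<and> j = 0") (auto simp: idm_def)
qed

lemma permutes_lessThan_2: "{p. p permutes {..<2::nat}} = {id, transpose 0 1}"
proof (intro equalityI subsetI)
  fix p assume "p \<in> {p. p permutes {..<2::nat}}"
  then have p: "p permutes {..<2::nat}" by simp
  have lt: "p 0 < 2" "p 1 < 2"
    using permutes_lessThanD[OF p] by auto
  have "p 0 \<noteq> p 1"
    using permutes_inj[OF p] by (metis inj_eq zero_neq_one)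
  have out: "p x = x" if "x \<ge> 2" for x
    using permutes_not_in[OF p] that by simp
  have cases_x: "x = 0 \<or> x = 1 \<or> x \<ge> 2" for x :: nat
    by linarith
  consider "p 0 = 0" "p 1 = 1" | "p 0 = 1" "p 1 = 0"
    using lt \<open>p 0 \<noteq> p 1\<close> by linarith
  then show "p \<in> {id, transpose 0 1}"
  proof cases
    case 1
    then have "p x = x" for x
      using cases_x[of x] out by auto
    then have "p = id"
      by auto
    then show ?thesis by simp
  next
    case 2
    then have "p x = transpose 0 1 x" for x
      using cases_x[of x] out by auto
    then have "p = transpose 0 1"
      by auto
    then show ?thesis by simp
  qed
qed (auto intro: permutes_swap_id)

lemma det_2:
  assumes "\<And>i j. A i j \<in> carrier R"
  shows "det R 2 A = A 0 0 \<otimes> A 1 1 \<ominus> A 0 1 \<otimes> A 1 0"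
proof -
  have "{..<2::nat} = {0, 1}" by auto
  moreover have "id \<noteq> (transpose 0 1 :: nat \<Rightarrow> nat)"
    by (metis id_apply transpose_apply_first zero_neq_one)
  ultimately show ?thesis
    unfolding det_perm_sign permutes_lessThan_2 using assms
    by (simp add: finsum_insert perm_sign_def evenperm_swap l_minus m_comm minus_eq)
qed

end

section \<open>Products of elementary matrices\<close>

text \<open>By \<open>E_eq_elem_products\<close>
  this is \<open>E R n\<close>; the inductive description avoids the inverses in \<open>generate\<close>, taken in the
  monoid \<open>SL_grp R n\<close>, which is not known to be a group at this point.\<close>

inductive_set elem_products :: "('a, 'b) ring_scheme \<Rightarrow> nat \<Rightarrow> (nat \<Rightarrow> nat \<Rightarrow> 'a) set"
  for R n where
  idm: "idm R \<in> elem_products R n"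
| elem_mult: "\<lbrakk>i < n; j < n; i \<noteq> j; a \<in> carrier R; g \<in> elem_products R n\<rbrakk>
    \<Longrightarrow> mat_mult R n (elem R i j a) g \<in> elem_products R n"

context cring
begin

lemma is_mat_elem_products: "g \<in> elem_products R n \<Longrightarrow> is_mat R n g"
  by (induction rule: elem_products.induct) auto

lemma elem_products_mult:
  "g \<in> elem_products R n \<Longrightarrow> h \<in> elem_products R n \<Longrightarrow> mat_mult R n g h \<in> elem_products R n"
proof (induction rule: elem_products.induct)
  case idm
  then show ?case by (simp add: is_mat_elem_products)
next
  case (elem_mult i j a g)
  then show ?case
    by (simp add: mat_mult_assoc is_mat_elem_products elem_products.elem_mult)
qed

lemma elem_in_elem_products:
  "i < n \<Longrightarrow> j < n \<Longrightarrow> i \<noteq> j \<Longrightarrow> a \<in> carrier R \<Longrightarrow> elem R i j a \<in> elem_products R n"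
  using elem_products.elem_mult[OF _ _ _ _ elem_products.idm, of i n j a R] by simp

lemma elem_products_mono: "g \<in> elem_products R n \<Longrightarrow> n \<le> m \<Longrightarrow> g \<in> elem_products R m"
proof (induction rule: elem_products.induct)
  case idm
  show ?case by (rule elem_products.idm)
next
  case (elem_mult i j a g)
  then have "mat_mult R m (elem R i j a) g = mat_mult R n (elem R i j a) g"
    by (intro mat_mult_size_indep) (auto simp: is_mat_elem_products)
  then show ?case
    using elem_mult elem_products.elem_mult[of i m j a R g] by simp
qed

lemma elem_products_left_inverse:
  "g \<in> elem_products R n \<Longrightarrow> \<exists>h\<in>elem_products R n. mat_mult R n h g = idm R"
proof (induction rule: elem_products.induct)
  case idm
  show ?case using elem_products.idm by force
next
  case (elem_mult i j a g)
  then obtain h where h: "h \<in> elem_products R n" "mat_mult R n h g = idm R" by auto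
  let ?e = "elem R i j a" and ?e' = "elem R i j (\<ominus> a)"
  have "mat_mult R n (mat_mult R n h ?e') (mat_mult R n ?e g)
      = mat_mult R n h (mat_mult R n (mat_mult R n ?e' ?e) g)"
    using h elem_mult by (simp add: mat_mult_assoc is_mat_elem_products)
  also have "\<dots> = idm R"
    using h elem_mult by (simp add: elem_inverse is_mat_elem_products)
  finally show ?case
    using h elem_mult by (meson elem_in_elem_products elem_products_mult a_inv_closed)
qed

lemma det_elem_products_mult:
  "g \<in> elem_products R n \<Longrightarrow> is_mat R n Y \<Longrightarrow> det R n (mat_mult R n g Y) = det R n Y"
proof (induction arbitrary: Y rule: elem_products.induct)
  case (elem_mult i j a g)
  then show ?case
    by (simp add: mat_mult_assoc is_mat_elem_products det_elem_mat_mult)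
qed simp

lemma elem_products_SL: "g \<in> elem_products R n \<Longrightarrow> g \<in> SL R n"
  using det_elem_products_mult[of g n "idm R"] by (simp add: SL_def is_mat_elem_products)

lemma elem_products_mult_SL:
  "g \<in> elem_products R n \<Longrightarrow> A \<in> SL R n \<Longrightarrow> mat_mult R n g A \<in> SL R n"
  by (simp add: SL_def det_elem_products_mult is_mat_elem_products)

lemma SL_Suc_last_row:
  assumes A: "A \<in> SL R n" and r: "\<And>j. r j \<in> carrier R"
  shows "(\<lambda>i j. if i = n \<and> j < n then r j else A i j) \<in> SL R (Suc n)"
    (is "?A \<in> _")
proof -
  have A_mat: "is_mat R n A" and "det R n A = \<one>"
    using A by (auto simp: SL_def)
  have "is_mat R (Suc n) ?A"
    using A_mat r by (auto simp: is_mat_def)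
  moreover have "det R (Suc n) ?A = det R n ?A"
    using A_mat r by (intro det_Suc_unit_last_col) (auto simp: is_mat_col_outside[OF A_mat] idm_def)
  moreover have "det R n ?A = det R n A"
    using A_mat by (intro det_cong) auto
  ultimately show ?thesis
    using \<open>det R n A = \<one>\<close> by (simp add: SL_def)
qed

lemma SL_Suc: "A \<in> SL R n \<Longrightarrow> A \<in> SL R (Suc n)"
proof -
  assume A: "A \<in> SL R n"
  then have "is_mat R n A" by (simp add: SL_def)
  then have "(\<lambda>i j. if i = n \<and> j < n then \<zero> else A i j) = A"
    by (intro ext) (simp add: is_mat_row_outside[OF \<open>is_mat R n A\<close>] idm_def)
  then show ?thesis
    using SL_Suc_last_row[OF A, of "\<lambda>_. \<zero>"] by simp
qed

lemma SL_mono: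
  assumes "A \<in> SL R n" "n \<le> m"
  shows "A \<in> SL R m"
  using assms(2) by (induction m rule: dec_induct) (use assms(1) in \<open>auto intro: SL_Suc\<close>)

lemma SL_upper_block:
  assumes Z: "is_mat R (Suc n) Z" "\<forall>k<n. Z k n = \<zero>" "Z n n = \<one>" and "det R (Suc n) Z = \<one>"
  shows "(\<lambda>i j. if i < n \<and> j < n then Z i j else idm R i j) \<in> SL R n"
proof -
  have "det R n (\<lambda>i j. if i < n \<and> j < n then Z i j else idm R i j) = det R n Z"
    using Z(1) by (intro det_cong) auto
  also have "\<dots> = det R (Suc n) Z"
    using Z by (intro det_Suc_unit_last_col[symmetric]) auto
  finally show ?thesis
    using assms by (auto simp: SL_def is_mat_def)
qed

lemma stab_mult_eq_mat_mult:
  assumes "A \<in> SL R n" "B \<in> SL R n"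
  shows "stab_mult R A B = mat_mult R n A B"
proof -
  let ?k = "LEAST k. A \<in> SL R k \<and> B \<in> SL R k"
  have "A \<in> SL R ?k \<and> B \<in> SL R ?k"
    by (rule LeastI[of _ n]) (use assms in auto)
  moreover have "?k \<le> n"
    by (rule Least_le) (use assms in auto)
  ultimately have "mat_mult R n A B = mat_mult R ?k A B"
    by (intro mat_mult_size_indep) (auto simp: SL_def)
  then show ?thesis
    by (simp add: stab_mult_def)
qed

lemma SL_grp_inv_elem:
  assumes "i < n" "j < n" "i \<noteq> j" "a \<in> carrier R"
  shows "inv\<^bsub>SL_grp R n\<^esub> elem R i j a = elem R i j (\<ominus> a)"
  unfolding m_inv_def
proof (rule the_equality)
  let ?e = "elem R i j a" and ?e' = "elem R i j (\<ominus> a)"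
  have inverse: "mat_mult R n ?e ?e' = idm R" "mat_mult R n ?e' ?e = idm R"
    using assms elem_inverse[of i n j "\<ominus> a"] elem_inverse[of i n j a] by simp_all
  then show "?e' \<in> carrier (SL_grp R n) \<and> ?e \<otimes>\<^bsub>SL_grp R n\<^esub> ?e' = \<one>\<^bsub>SL_grp R n\<^esub>
      \<and> ?e' \<otimes>\<^bsub>SL_grp R n\<^esub> ?e = \<one>\<^bsub>SL_grp R n\<^esub>"
    using assms by (simp add: SL_grp_def elem_products_SL elem_in_elem_products)
  fix y
  assume "y \<in> carrier (SL_grp R n) \<and> ?e \<otimes>\<^bsub>SL_grp R n\<^esub> y = \<one>\<^bsub>SL_grp R n\<^esub>
      \<and> y \<otimes>\<^bsub>SL_grp R n\<^esub> ?e = \<one>\<^bsub>SL_grp R n\<^esub>"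
  then have y: "is_mat R n y" "mat_mult R n y ?e = idm R"
    by (auto simp: SL_grp_def SL_def)
  have "y = mat_mult R n y (mat_mult R n ?e ?e')"
    using y inverse by simp
  also have "\<dots> = mat_mult R n (mat_mult R n y ?e) ?e'"
    using y assms by (intro mat_mult_assoc[symmetric]) auto
  also have "\<dots> = ?e'"
    using y assms by simp
  finally show "y = ?e'" .
qed

lemma E_eq_elem_products: "E R n = elem_products R n"
proof
  let ?G = "SL_grp R n"
  let ?H = "{elem R i j a | i j a. i < n \<and> j < n \<and> i \<noteq> j \<and> a \<in> carrier R}"
  show "E R n \<subseteq> elem_products R n"
  proof
    fix g assume "g \<in> E R n"
    then have "g \<in> generate ?G ?H" by (simp add: E_def)
    then show "g \<in> elem_products R n"
    proof (induction rule: generate.induct)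
      case one
      then show ?case by (simp add: SL_grp_def elem_products.idm)
    next
      case (incl h)
      then show ?case by (auto intro: elem_in_elem_products)
    next
      case (inv h)
      then obtain i j a where "h = elem R i j a" "i < n" "j < n" "i \<noteq> j" "a \<in> carrier R"
        by blast
      then show ?case by (simp add: SL_grp_inv_elem elem_in_elem_products)
    next
      case (eng h1 h2)
      then show ?case by (simp add: SL_grp_def elem_products_mult)
    qed
  qed
  show "elem_products R n \<subseteq> E R n"
  proof
    fix g assume "g \<in> elem_products R n"
    then show "g \<in> E R n"
    proof (induction rule: elem_products.induct)
      case idm
      then show ?case using generate.one[of ?G ?H] by (simp add: E_def SL_grp_def)
    next
      case (elem_mult i j a g)
      have "elem R i j a \<in> generate ?G ?H"
        using elem_mult by (intro generate.incl) auto
      then have "elem R i j a \<otimes>\<^bsub>?G\<^esub> g \<in> generate ?G ?H"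
        using elem_mult by (intro generate.eng) (auto simp: E_def)
      then show ?case by (simp add: E_def SL_grp_def)
    qed
  qed
qed

lemma E_all_eq: "E_all R = (\<Union>n. elem_products R n)"
  by (simp add: E_all_def E_eq_elem_products)

end

section \<open>Row equivalence\<close>

definition row_equiv :: "('a, 'b) ring_scheme \<Rightarrow> nat \<Rightarrow> (nat \<Rightarrow> nat \<Rightarrow> 'a) \<Rightarrow> (nat \<Rightarrow> nat \<Rightarrow> 'a) \<Rightarrow> bool"
  where "row_equiv R n Y Z \<longleftrightarrow> (\<exists>g\<in>elem_products R n. Z = mat_mult R n g Y)"

context cring
begin

lemma row_equiv_refl: "is_mat R n Y \<Longrightarrow> row_equiv R n Y Y"
  unfolding row_equiv_def using elem_products.idm by force

lemma is_mat_row_equiv: "is_mat R n Y \<Longrightarrow> row_equiv R n Y Z \<Longrightarrow> is_mat R n Z"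
  unfolding row_equiv_def using is_mat_elem_products by auto

lemma row_equiv_trans:
  assumes "is_mat R n Y" "row_equiv R n Y Z" "row_equiv R n Z W"
  shows "row_equiv R n Y W"
proof -
  obtain g h where "g \<in> elem_products R n" "Z = mat_mult R n g Y"
    and "h \<in> elem_products R n" "W = mat_mult R n h Z"
    using assms by (auto simp: row_equiv_def)
  then show ?thesis
    unfolding row_equiv_def using assms(1)
    by (metis elem_products_mult is_mat_elem_products mat_mult_assoc)
qed

lemma row_equiv_sym:
  assumes "is_mat R n Y" "row_equiv R n Y Z"
  shows "row_equiv R n Z Y"
proof -
  obtain g where g: "g \<in> elem_products R n" "Z = mat_mult R n g Y"
    using assms by (auto simp: row_equiv_def)
  obtain h where "h \<in> elem_products R n" "mat_mult R n h g = idm R"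
    using elem_products_left_inverse[OF g(1)] by blast
  then have "Y = mat_mult R n h Z"
    using g assms(1) by (simp add: mat_mult_assoc[symmetric] is_mat_elem_products)
  then show ?thesis
    using \<open>h \<in> elem_products R n\<close> by (auto simp: row_equiv_def)
qed

lemma det_row_equiv: "is_mat R n Y \<Longrightarrow> row_equiv R n Y Z \<Longrightarrow> det R n Z = det R n Y"
  by (auto simp: row_equiv_def det_elem_products_mult)

lemma row_equiv_add_row:
  assumes "is_mat R n Z" "i < n" "j < n" "i \<noteq> j" "a \<in> carrier R"
  shows "row_equiv R n Z (\<lambda>k l. if k = i \<and> l < n then Z i l \<oplus> a \<otimes> Z j l else Z k l)"
  unfolding row_equiv_def using elem_mat_mult[OF assms] elem_in_elem_products[OF assms(2-5)] by metis

lemma row_equiv_add_rows: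
  assumes Y: "is_mat R n Y" and "i < n" and w: "\<And>t. w t \<in> carrier R" and "w i = \<zero>" and "q \<le> n"
  shows "row_equiv R n Y (\<lambda>k l. if k = i \<and> l < n then Y i l \<oplus> (\<Oplus>t\<in>{..<q}. w t \<otimes> Y t l) else Y k l)"
  using \<open>q \<le> n\<close>
proof (induction q)
  case 0
  have "(\<lambda>k l. if k = i \<and> l < n then Y i l \<oplus> (\<Oplus>t\<in>{..<0::nat}. w t \<otimes> Y t l) else Y k l) = Y"
    using Y by (intro ext) auto
  then show ?case using row_equiv_refl[OF Y] by simp
next
  case (Suc q)
  define Z where "Z = (\<lambda>k l. if k = i \<and> l < n then Y i l \<oplus> (\<Oplus>t\<in>{..<q}. w t \<otimes> Y t l) else Y k l)"
  have YZ: "row_equiv R n Y Z" using Suc by (simp add: Z_def)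
  have sum_Suc: "(\<Oplus>t\<in>{..<Suc q}. w t \<otimes> Y t l) = w q \<otimes> Y q l \<oplus> (\<Oplus>t\<in>{..<q}. w t \<otimes> Y t l)" for l
    using Y w by (simp add: finsum_lessThan_Suc)
  show ?case
  proof (cases "q = i")
    case True
    have "(\<lambda>k l. if k = i \<and> l < n then Y i l \<oplus> (\<Oplus>t\<in>{..<Suc q}. w t \<otimes> Y t l) else Y k l) = Z"
      unfolding Z_def sum_Suc using True \<open>w i = \<zero>\<close> Y w by (intro ext) (simp add: Pi_def finsum_closed)
    then show ?thesis using YZ by simp
  next
    case False
    have ZW: "row_equiv R n Z (\<lambda>k l. if k = i \<and> l < n then Z i l \<oplus> w q \<otimes> Z q l else Z k l)"
      using row_equiv_add_row[OF is_mat_row_equiv[OF Y YZ] \<open>i < n\<close> _ _ w] False Suc by auto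
    have "(\<lambda>k l. if k = i \<and> l < n then Z i l \<oplus> w q \<otimes> Z q l else Z k l)
        = (\<lambda>k l. if k = i \<and> l < n then Y i l \<oplus> (\<Oplus>t\<in>{..<Suc q}. w t \<otimes> Y t l) else Y k l)"
      unfolding sum_Suc using False Y w by (intro ext) (auto simp: Z_def a_ac Pi_def finsum_closed)
    then show ?thesis using row_equiv_trans[OF Y YZ ZW] by simp
  qed
qed

lemma row_equiv_clear_last_col:
  assumes Y: "is_mat R (Suc n) Y" and "Y n n = \<one>"
  shows "\<exists>Z. row_equiv R (Suc n) Y Z \<and> (\<forall>k<n. Z k n = \<zero>) \<and> Z n n = \<one>"
proof -
  have "\<exists>Z. row_equiv R (Suc n) Y Z \<and> (\<forall>k<q. Z k n = \<zero>) \<and> Z n n = \<one>" if "q \<le> n" for q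
    using that
  proof (induction q)
    case 0
    then show ?case using row_equiv_refl[OF Y] \<open>Y n n = \<one>\<close> by auto
  next
    case (Suc q)
    then obtain Z where Z: "row_equiv R (Suc n) Y Z" "\<forall>k<q. Z k n = \<zero>" "Z n n = \<one>"
      by auto
    have Z_mat: "is_mat R (Suc n) Z" using is_mat_row_equiv[OF Y Z(1)] .
    let ?W = "\<lambda>k l. if k = q \<and> l < Suc n then Z q l \<oplus> (\<ominus> Z q n) \<otimes> Z n l else Z k l"
    have "row_equiv R (Suc n) Z ?W"
      using Suc Z_mat by (intro row_equiv_add_row) auto
    moreover have "\<forall>k<Suc q. ?W k n = \<zero>" "?W n n = \<one>"
      using Z Z_mat Suc by (auto simp: less_Suc_eq r_neg)
    ultimately show ?case using row_equiv_trans[OF Y Z(1)] by blast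
  qed
  then show ?thesis by blast
qed

lemma row_equiv_Suc_last_row:
  assumes Z: "is_mat R (Suc n) Z" "\<forall>k<n. Z k n = \<zero>" "Z n n = \<one>" and B: "is_mat R n B"
    and "row_equiv R n B (\<lambda>i j. if i < n \<and> j < n then Z i j else idm R i j)"
  shows "row_equiv R (Suc n) (\<lambda>i j. if i = n \<and> j < n then Z n j else B i j) Z"
proof -
  let ?B = "\<lambda>i j. if i = n \<and> j < n then Z n j else B i j"
  obtain e where e: "e \<in> elem_products R n"
    and block: "(\<lambda>i j. if i < n \<and> j < n then Z i j else idm R i j) = mat_mult R n e B"
    using assms(5) by (auto simp: row_equiv_def)
  have e_mat: "is_mat R n e"
    using e by (rule is_mat_elem_products)
  have B': "\<And>k l. ?B k l \<in> carrier R"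
    using Z B by simp
  have "mat_mult R (Suc n) e ?B i j = Z i j" for i j
  proof -
    consider "i < n" "j < Suc n" | "i = n" "j < Suc n" | "\<not> (i < Suc n \<and> j < Suc n)"
      by linarith
    then show ?thesis
    proof cases
      case 1
      have "mat_mult R (Suc n) e ?B i j = (\<Oplus>k\<in>{..<n}. e i k \<otimes> ?B k j)"
        using 1 by (intro mat_mult_Suc_upper_rows[OF e_mat B'])
      also have "\<dots> = (\<Oplus>k\<in>{..<n}. e i k \<otimes> B k j)"
        using e_mat B by (intro finsum_cong') auto
      also have "\<dots> = mat_mult R (Suc n) e B i j"
        using 1 B by (intro mat_mult_Suc_upper_rows[symmetric, OF e_mat]) auto
      also have "\<dots> = mat_mult R n e B i j"
        using mat_mult_size_indep[OF e_mat B, of "Suc n"] by simp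
      also have "\<dots> = (if i < n \<and> j < n then Z i j else idm R i j)"
        using block by (simp add: fun_eq_iff)
      also have "\<dots> = Z i j"
        using 1 Z(2) by (auto simp: idm_def less_Suc_eq)
      finally show ?thesis .
    next
      case 2
      then show ?thesis
        using Z(3) by (auto simp: mat_mult_Suc_last_row[OF e_mat B'] is_mat_col_outside[OF B] idm_def
            less_Suc_eq)
    next
      case 3
      then show ?thesis
        using Z(1) by (auto simp: mat_mult_outside is_mat_def)
    qed
  qed
  then have "Z = mat_mult R (Suc n) e ?B"
    by (intro ext) simp
  moreover have "e \<in> elem_products R (Suc n)"
    using elem_products_mono[OF e] by simp
  ultimately show ?thesis
    unfolding row_equiv_def by blast
qed

end

section \<open>Unimodular rows and stable rank\<close>

context cring
begin

lemma unimodularI: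
  "(\<And>i. i < n \<Longrightarrow> r i \<in> carrier R) \<Longrightarrow> (\<And>i. i < n \<Longrightarrow> s i \<in> carrier R) \<Longrightarrow>
    (\<Oplus>i\<in>{..<n}. s i \<otimes> r i) = \<one> \<Longrightarrow> unimodular R n r"
  unfolding unimodular_def by blast

lemma unimodularE:
  assumes "unimodular R n r"
  obtains s where "\<And>i. i < n \<Longrightarrow> r i \<in> carrier R" "\<And>i. i < n \<Longrightarrow> s i \<in> carrier R"
    "(\<Oplus>i\<in>{..<n}. s i \<otimes> r i) = \<one>"
  using assms unfolding unimodular_def by blast

lemma unimodular_cong:
  assumes "unimodular R n r" "\<And>i. i < n \<Longrightarrow> r' i = r i"
  shows "unimodular R n r'"
proof -
  obtain s where r: "\<And>i. i < n \<Longrightarrow> r i \<in> carrier R" and s: "\<And>i. i < n \<Longrightarrow> s i \<in> carrier R"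
    and sum: "(\<Oplus>i\<in>{..<n}. s i \<otimes> r i) = \<one>"
    using assms(1) by (rule unimodularE) blast
  have "(\<Oplus>i\<in>{..<n}. s i \<otimes> r' i) = (\<Oplus>i\<in>{..<n}. s i \<otimes> r i)"
    using r s assms(2) by (intro finsum_lessThan_cong) auto
  then show ?thesis
    using r s sum assms(2) by (intro unimodularI[where s = s]) auto
qed

lemma unimodular_last_col:
  assumes "is_mat R (Suc n) A" "det R (Suc n) A = \<one>"
  shows "unimodular R (Suc n) (\<lambda>i. A i n)"
  using det_last_col_lin_comb[of A n] assms unfolding unimodular_def by auto

lemma unimodular_2_iff:
  "unimodular R 2 r \<longleftrightarrow> r 0 \<in> carrier R \<and> r 1 \<in> carrier R \<and>
    (\<exists>p\<in>carrier R. \<exists>q\<in>carrier R. p \<otimes> r 0 \<oplus> q \<otimes> r 1 = \<one>)"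
    (is "_ \<longleftrightarrow> ?rhs")
proof
  assume "unimodular R 2 r"
  then obtain s where r: "\<And>i. i < 2 \<Longrightarrow> r i \<in> carrier R" and s: "\<And>i. i < 2 \<Longrightarrow> s i \<in> carrier R"
    and sum: "(\<Oplus>i\<in>{..<2}. s i \<otimes> r i) = \<one>"
    by (rule unimodularE) blast
  have carrier: "r 0 \<in> carrier R" "r 1 \<in> carrier R" "s 0 \<in> carrier R" "s 1 \<in> carrier R"
    using r s by auto
  then have "s 0 \<otimes> r 0 \<oplus> s 1 \<otimes> r 1 = \<one>"
    using sum finsum_lessThan_2[of "\<lambda>i. s i \<otimes> r i"] by simp
  with carrier show ?rhs
    by blast
next
  assume ?rhs
  then obtain p q where carrier: "r 0 \<in> carrier R" "r 1 \<in> carrier R" "p \<in> carrier R" "q \<in> carrier R"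
    and "p \<otimes> r 0 \<oplus> q \<otimes> r 1 = \<one>"
    by blast
  moreover have "(\<Oplus>i\<in>{..<2}. (if i = 0 then p else q) \<otimes> r i) = p \<otimes> r 0 \<oplus> q \<otimes> r 1"
    using carrier finsum_lessThan_2[of "\<lambda>i. (if i = 0 then p else q) \<otimes> r i"] by simp
  moreover have "i < 2 \<Longrightarrow> r i \<in> carrier R" "i < 2 \<Longrightarrow> (if i = 0 then p else q) \<in> carrier R" for i :: nat
    using carrier by (auto simp: less_2_cases_iff)
  ultimately show "unimodular R 2 r"
    by (intro unimodularI[where s = "\<lambda>i. if i = 0 then p else q"]) auto
qed

lemma unimodular_merge_last_two:
  assumes "unimodular R (Suc (Suc n)) r"
  shows "\<exists>a\<in>carrier R. \<exists>b\<in>carrier R. unimodular R (Suc n) (r(n := a \<otimes> r n \<oplus> b \<otimes> r (Suc n)))"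
proof -
  obtain w where r: "\<And>i. i < Suc (Suc n) \<Longrightarrow> r i \<in> carrier R"
    and w: "\<And>i. i < Suc (Suc n) \<Longrightarrow> w i \<in> carrier R"
    and sum_w: "(\<Oplus>i\<in>{..<Suc (Suc n)}. w i \<otimes> r i) = \<one>"
    using assms by (rule unimodularE) blast
  define c where "c = w n \<otimes> r n \<oplus> w (Suc n) \<otimes> r (Suc n)"
  have c: "c \<in> carrier R"
    using r w by (simp add: c_def)
  have "(\<Oplus>i\<in>{..<Suc n}. (w(n := \<one>)) i \<otimes> (r(n := c)) i)
      = \<one> \<otimes> c \<oplus> (\<Oplus>i\<in>{..<n}. (w(n := \<one>)) i \<otimes> (r(n := c)) i)"
    using r w c by (subst finsum_lessThan_Suc) auto
  also have "(\<Oplus>i\<in>{..<n}. (w(n := \<one>)) i \<otimes> (r(n := c)) i) = (\<Oplus>i\<in>{..<n}. w i \<otimes> r i)"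
    using r w by (intro finsum_lessThan_cong) auto
  also have "\<one> \<otimes> c \<oplus> (\<Oplus>i\<in>{..<n}. w i \<otimes> r i) = (\<Oplus>i\<in>{..<Suc (Suc n)}. w i \<otimes> r i)"
    using r w c by (simp add: finsum_lessThan_Suc c_def a_assoc Pi_def finsum_closed a_lcomm)
  finally have "unimodular R (Suc n) (r(n := c))"
    using r w c sum_w by (intro unimodularI[where s = "w(n := \<one>)"]) auto
  moreover have "w n \<in> carrier R" "w (Suc n) \<in> carrier R"
    using w by auto
  ultimately show ?thesis
    unfolding c_def by blast
qed

lemma unimodular_split_last:
  assumes r: "\<And>i. i < Suc (Suc n) \<Longrightarrow> r i \<in> carrier R" and s: "\<And>i. i < n \<Longrightarrow> s i \<in> carrier R"
    and a: "a \<in> carrier R" and b: "b \<in> carrier R"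
    and "unimodular R n (\<lambda>i. r i \<oplus> s i \<otimes> (a \<otimes> r n \<oplus> b \<otimes> r (Suc n)))"
  shows "unimodular R (Suc n) (\<lambda>i. r i \<oplus> ((\<lambda>i. s i \<otimes> b)(n := \<zero>)) i \<otimes> r (Suc n))"
proof -
  obtain y where y: "\<And>i. i < n \<Longrightarrow> y i \<in> carrier R"
    and sum_y: "(\<Oplus>i\<in>{..<n}. y i \<otimes> (r i \<oplus> s i \<otimes> (a \<otimes> r n \<oplus> b \<otimes> r (Suc n)))) = \<one>"
    using assms(5) by (rule unimodularE) blast
  define d where "d = (\<Oplus>i\<in>{..<n}. y i \<otimes> s i \<otimes> a)"
  have d: "d \<in> carrier R"
    using s y a by (simp add: d_def Pi_def finsum_closed)
  let ?s' = "(\<lambda>i. s i \<otimes> b)(n := \<zero>)"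
  let ?f = "\<lambda>i. y i \<otimes> (r i \<oplus> (s i \<otimes> b) \<otimes> r (Suc n))"
  have "(\<Oplus>i\<in>{..<Suc n}. (y(n := d)) i \<otimes> (r i \<oplus> ?s' i \<otimes> r (Suc n)))
      = d \<otimes> (r n \<oplus> \<zero> \<otimes> r (Suc n)) \<oplus> (\<Oplus>i\<in>{..<n}. (y(n := d)) i \<otimes> (r i \<oplus> ?s' i \<otimes> r (Suc n)))"
    using r s y d b by (subst finsum_lessThan_Suc) auto
  also have "(\<Oplus>i\<in>{..<n}. (y(n := d)) i \<otimes> (r i \<oplus> ?s' i \<otimes> r (Suc n))) = (\<Oplus>i\<in>{..<n}. ?f i)"
    using r s y b by (intro finsum_lessThan_cong) auto
  also have "d \<otimes> (r n \<oplus> \<zero> \<otimes> r (Suc n)) = (\<Oplus>i\<in>{..<n}. y i \<otimes> s i \<otimes> a \<otimes> r n)"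
    using r s y a unfolding d_def by (simp add: finsum_ldistr Pi_def)
  also have "(\<Oplus>i\<in>{..<n}. y i \<otimes> s i \<otimes> a \<otimes> r n) \<oplus> (\<Oplus>i\<in>{..<n}. ?f i)
      = (\<Oplus>i\<in>{..<n}. y i \<otimes> s i \<otimes> a \<otimes> r n \<oplus> ?f i)"
    using r s y a b by (intro finsum_addf[symmetric]) (auto simp: Pi_def)
  also have "\<dots> = (\<Oplus>i\<in>{..<n}. y i \<otimes> (r i \<oplus> s i \<otimes> (a \<otimes> r n \<oplus> b \<otimes> r (Suc n))))"
  proof (rule finsum_lessThan_cong)
    fix i assume "i < n"
    then have "r i \<in> carrier R" "r n \<in> carrier R" "r (Suc n) \<in> carrier R" "s i \<in> carrier R" "y i \<in> carrier R"
      using r s y by auto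
    then show "y i \<otimes> s i \<otimes> a \<otimes> r n \<oplus> ?f i = y i \<otimes> (r i \<oplus> s i \<otimes> (a \<otimes> r n \<oplus> b \<otimes> r (Suc n)))"
      using a b by algebra
  qed (use r s y a b in simp)
  finally show ?thesis
    using r s y d sum_y b by (intro unimodularI[where s = "y(n := d)"]) auto
qed

text \<open>Bass: merge the last two entries of a unimodular row, stabilise the shorter row and
  split the merged entry again.\<close>

lemma sr_cond_Suc:
  assumes "sr_cond R n"
  shows "sr_cond R (Suc n)"
  unfolding sr_cond_def
proof (intro allI impI)
  fix r assume r: "unimodular R (Suc (Suc n)) r"
  have "\<exists>a\<in>carrier R. \<exists>b\<in>carrier R. unimodular R (Suc n) (r(n := a \<otimes> r n \<oplus> b \<otimes> r (Suc n)))"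
    using r by (rule unimodular_merge_last_two)
  then obtain a b where ab: "a \<in> carrier R" "b \<in> carrier R"
    and "unimodular R (Suc n) (r(n := a \<otimes> r n \<oplus> b \<otimes> r (Suc n)))"
    by blast
  then have "stable_row R n (r(n := a \<otimes> r n \<oplus> b \<otimes> r (Suc n)))"
    using assms by (simp add: sr_cond_def)
  then obtain s where s: "\<And>i. i < n \<Longrightarrow> s i \<in> carrier R" and unimodular_s:
    "unimodular R n (\<lambda>i. (r(n := a \<otimes> r n \<oplus> b \<otimes> r (Suc n))) i \<oplus>
      s i \<otimes> (r(n := a \<otimes> r n \<oplus> b \<otimes> r (Suc n))) n)"
    unfolding stable_row_def by blast
  have "unimodular R n (\<lambda>i. r i \<oplus> s i \<otimes> (a \<otimes> r n \<oplus> b \<otimes> r (Suc n)))"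
    using unimodular_s by (rule unimodular_cong) simp
  moreover have "\<And>i. i < Suc (Suc n) \<Longrightarrow> r i \<in> carrier R"
    using r by (simp add: unimodular_def)
  ultimately have "unimodular R (Suc n) (\<lambda>i. r i \<oplus> ((\<lambda>i. s i \<otimes> b)(n := \<zero>)) i \<otimes> r (Suc n))"
    using s ab by (intro unimodular_split_last)
  moreover have "\<forall>i<Suc n. ((\<lambda>i. s i \<otimes> b)(n := \<zero>)) i \<in> carrier R"
    using s ab by simp
  ultimately show "stable_row R (Suc n) r"
    unfolding stable_row_def by (intro exI[of _ "(\<lambda>i. s i \<otimes> b)(n := \<zero>)"] conjI)
qed

lemma sr_cond_mono:
  assumes "sr_cond R n" "n \<le> m"
  shows "sr_cond R m"
  using assms(2) by (induction m rule: dec_induct) (use assms(1) sr_cond_Suc in auto)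

lemma sr_cond_of_sr_le:
  assumes "sr R \<le> enat n"
  shows "sr_cond R n"
proof -
  have "\<exists>k>0. sr_cond R k"
    using assms by (auto simp: sr_def split: if_splits)
  then obtain k where "sr R = enat k" "sr_cond R k"
    by (metis (mono_tags, lifting) LeastI sr_def)
  then show ?thesis
    using assms sr_cond_mono by auto
qed

lemma sr_cond_2_triple:
  assumes "sr_cond R 2"
    and carrier: "a \<in> carrier R" "b \<in> carrier R" "c \<in> carrier R" "\<alpha> \<in> carrier R" "\<beta> \<in> carrier R" "\<gamma> \<in> carrier R"
    and "\<alpha> \<otimes> a \<oplus> \<beta> \<otimes> b \<oplus> \<gamma> \<otimes> c = \<one>"
  shows "\<exists>s\<^sub>0\<in>carrier R. \<exists>s\<^sub>1\<in>carrier R. \<exists>u\<in>carrier R. \<exists>v\<in>carrier R.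
    u \<otimes> (a \<oplus> s\<^sub>0 \<otimes> c) \<oplus> v \<otimes> (b \<oplus> s\<^sub>1 \<otimes> c) = \<one>"
proof -
  have three: "{..<3::nat} = {0, 1, 2}" and two: "{..<2::nat} = {0, 1}"
    by auto
  let ?r = "(\<lambda>_ :: nat. c)(0 := a, 1 := b)"
  have "unimodular R 3 ?r"
    using carrier assms(8)
    by (intro unimodularI[where s = "(\<lambda>_ :: nat. \<gamma>)(0 := \<alpha>, 1 := \<beta>)"]) (auto simp: three a_ac)
  then obtain s where s: "\<forall>i<2. s i \<in> carrier R" "unimodular R 2 (\<lambda>i. ?r i \<oplus> s i \<otimes> ?r 2)"
    using assms(1) by (auto simp: sr_cond_def stable_row_def numeral_3_eq_3)
  from s(2) obtain t where t: "\<And>i. i < 2 \<Longrightarrow> t i \<in> carrier R"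
    and "(\<Oplus>i\<in>{..<2}. t i \<otimes> (?r i \<oplus> s i \<otimes> ?r 2)) = \<one>"
    by (rule unimodularE) blast
  then have "t 0 \<otimes> (a \<oplus> s 0 \<otimes> c) \<oplus> t 1 \<otimes> (b \<oplus> s 1 \<otimes> c) = \<one>"
    using s carrier by (simp add: two)
  moreover have "s 0 \<in> carrier R" "s 1 \<in> carrier R" "t 0 \<in> carrier R" "t 1 \<in> carrier R"
    using s t by auto
  ultimately show ?thesis
    by blast
qed

lemma sr_cond_2_shorten:
  assumes "sr_cond R 2" and "unimodular R (Suc n) v" and "2 \<le> n"
  shows "\<exists>f t\<^sub>0 t\<^sub>1 u w. (\<forall>t. f t \<in> carrier R) \<and> f 0 = \<zero> \<and> f 1 = \<zero> \<and>
    t\<^sub>0 \<in> carrier R \<and> t\<^sub>1 \<in> carrier R \<and> u \<in> carrier R \<and> w \<in> carrier R \<and>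
    u \<otimes> (v 0 \<oplus> t\<^sub>0 \<otimes> (\<Oplus>t\<in>{..<Suc n}. f t \<otimes> v t)) \<oplus>
    w \<otimes> (v 1 \<oplus> t\<^sub>1 \<otimes> (\<Oplus>t\<in>{..<Suc n}. f t \<otimes> v t)) = \<one>"
proof -
  obtain s where v: "\<And>i. i < Suc n \<Longrightarrow> v i \<in> carrier R" and s: "\<And>i. i < Suc n \<Longrightarrow> s i \<in> carrier R"
    and sum: "(\<Oplus>i\<in>{..<Suc n}. s i \<otimes> v i) = \<one>"
    using assms(2) by (rule unimodularE) blast
  define f where "f t = (if 2 \<le> t \<and> t < Suc n then s t else \<zero>)" for t
  have f: "f t \<in> carrier R" for t
    using s by (simp add: f_def)
  define x where "x = (\<Oplus>t\<in>{..<Suc n}. f t \<otimes> v t)"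
  have x: "x \<in> carrier R"
    using f v by (simp add: x_def Pi_def finsum_closed)
  have "x = (\<Oplus>t\<in>{2..<Suc n}. s t \<otimes> v t)"
    unfolding x_def using f s v by (intro add.finprod_mono_neutral_cong_right) (auto simp: f_def)
  moreover have "(\<Oplus>i\<in>{..<Suc n}. s i \<otimes> v i)
      = s 0 \<otimes> v 0 \<oplus> (s 1 \<otimes> v 1 \<oplus> (\<Oplus>t\<in>{2..<Suc n}. s t \<otimes> v t))"
  proof -
    have "{..<Suc n} = insert 0 (insert 1 {2..<Suc n})"
      using \<open>2 \<le> n\<close> by auto
    then show ?thesis
      using s v \<open>2 \<le> n\<close> by (simp add: finsum_insert Pi_def)
  qed
  ultimately have "s 0 \<otimes> v 0 \<oplus> s 1 \<otimes> v 1 \<oplus> x = \<one>"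
    using sum s v \<open>2 \<le> n\<close> by (simp add: a_assoc)
  then have key: "s 0 \<otimes> v 0 \<oplus> s 1 \<otimes> v 1 \<oplus> \<one> \<otimes> x = \<one>"
    using x by simp
  have carrier: "v 0 \<in> carrier R" "v 1 \<in> carrier R" "s 0 \<in> carrier R" "s 1 \<in> carrier R"
    using v s \<open>2 \<le> n\<close> by auto
  have "\<exists>t\<^sub>0\<in>carrier R. \<exists>t\<^sub>1\<in>carrier R. \<exists>u\<in>carrier R. \<exists>w\<in>carrier R.
      u \<otimes> (v 0 \<oplus> t\<^sub>0 \<otimes> x) \<oplus> w \<otimes> (v 1 \<oplus> t\<^sub>1 \<otimes> x) = \<one>"
    using sr_cond_2_triple[OF assms(1) carrier(1,2) x carrier(3,4) one_closed key] .
  moreover have "f 0 = \<zero>" "f 1 = \<zero>"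
    by (simp_all add: f_def)
  ultimately show ?thesis
    using f unfolding x_def by blast
qed

lemma row_equiv_last_col_first_two:
  assumes "sr_cond R 2" and Y: "is_mat R (Suc n) Y" and "2 \<le> n"
    and "unimodular R (Suc n) (\<lambda>i. Y i n)"
  shows "\<exists>Z u v. row_equiv R (Suc n) Y Z \<and> u \<in> carrier R \<and> v \<in> carrier R \<and>
    u \<otimes> Z 0 n \<oplus> v \<otimes> Z 1 n = \<one>"
proof -
  let ?m = "Suc n"
  obtain f t\<^sub>0 t\<^sub>1 u v where f: "\<And>t. f t \<in> carrier R" "f 0 = \<zero>" "f 1 = \<zero>"
    and t: "t\<^sub>0 \<in> carrier R" "t\<^sub>1 \<in> carrier R" "u \<in> carrier R" "v \<in> carrier R"
    and uv: "u \<otimes> (Y 0 n \<oplus> t\<^sub>0 \<otimes> (\<Oplus>t\<in>{..<?m}. f t \<otimes> Y t n)) \<oplus>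
      v \<otimes> (Y 1 n \<oplus> t\<^sub>1 \<otimes> (\<Oplus>t\<in>{..<?m}. f t \<otimes> Y t n)) = \<one>"
    using sr_cond_2_shorten[OF assms(1,4,3)] by blast
  define x where "x = (\<Oplus>t\<in>{..<?m}. f t \<otimes> Y t n)"
  have sum_f: "(\<Oplus>t\<in>{..<?m}. (c \<otimes> f t) \<otimes> Z t n) = c \<otimes> x"
    if "c \<in> carrier R" "\<And>t. t \<noteq> 0 \<Longrightarrow> t \<noteq> 1 \<Longrightarrow> Z t n = Y t n" "\<And>t. Z t n \<in> carrier R" for c Z
  proof -
    have "(c \<otimes> f t) \<otimes> Z t n = c \<otimes> (f t \<otimes> Y t n)" for t
      using that f Y by (cases "t = 0 \<or> t = 1") (auto simp: m_assoc)
    then have "(\<Oplus>t\<in>{..<?m}. (c \<otimes> f t) \<otimes> Z t n) = (\<Oplus>t\<in>{..<?m}. c \<otimes> (f t \<otimes> Y t n))"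
      using that f Y by (intro finsum_cong') auto
    also have "\<dots> = c \<otimes> x"
      unfolding x_def using that f Y by (intro finsum_rdistr[symmetric]) (auto simp: Pi_def)
    finally show ?thesis .
  qed
  define Y\<^sub>1 where "Y\<^sub>1 = (\<lambda>k l. if k = 0 \<and> l < ?m then Y 0 l \<oplus> (\<Oplus>t\<in>{..<?m}. (t\<^sub>0 \<otimes> f t) \<otimes> Y t l) else Y k l)"
  have Y\<^sub>1: "row_equiv R ?m Y Y\<^sub>1"
    unfolding Y\<^sub>1_def using t f by (intro row_equiv_add_rows[OF Y]) auto
  have Y\<^sub>1_mat: "is_mat R ?m Y\<^sub>1"
    using is_mat_row_equiv[OF Y Y\<^sub>1] .
  define Y\<^sub>2 where "Y\<^sub>2 = (\<lambda>k l. if k = 1 \<and> l < ?m then Y\<^sub>1 1 l \<oplus> (\<Oplus>t\<in>{..<?m}. (t\<^sub>1 \<otimes> f t) \<otimes> Y\<^sub>1 t l) else Y\<^sub>1 k l)"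
  have Y\<^sub>2: "row_equiv R ?m Y\<^sub>1 Y\<^sub>2"
    unfolding Y\<^sub>2_def using t f \<open>2 \<le> n\<close> by (intro row_equiv_add_rows[OF Y\<^sub>1_mat]) auto
  have "Y\<^sub>1 0 n = Y 0 n \<oplus> t\<^sub>0 \<otimes> x"
    using sum_f[of "t\<^sub>0" Y] t Y by (simp add: Y\<^sub>1_def)
  moreover have "(\<Oplus>t\<in>{..<?m}. (t\<^sub>1 \<otimes> f t) \<otimes> Y\<^sub>1 t n) = t\<^sub>1 \<otimes> x"
  proof (rule sum_f[OF t(2)])
    show "Y\<^sub>1 t n \<in> carrier R" for t
      using Y\<^sub>1_mat by simp
  qed (simp add: Y\<^sub>1_def)
  ultimately have "Y\<^sub>2 0 n = Y 0 n \<oplus> t\<^sub>0 \<otimes> x" "Y\<^sub>2 1 n = Y 1 n \<oplus> t\<^sub>1 \<otimes> x"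
    by (simp_all add: Y\<^sub>2_def Y\<^sub>1_def)
  then have "u \<otimes> Y\<^sub>2 0 n \<oplus> v \<otimes> Y\<^sub>2 1 n = \<one>"
    using uv by (simp add: x_def)
  then show ?thesis
    using row_equiv_trans[OF Y Y\<^sub>1 Y\<^sub>2] t by blast
qed

lemma row_equiv_last_col_unit:
  assumes "sr_cond R 2" and Y: "is_mat R (Suc n) Y" and "2 \<le> n"
    and "unimodular R (Suc n) (\<lambda>i. Y i n)"
  shows "\<exists>Z. row_equiv R (Suc n) Y Z \<and> (\<forall>k<n. Z k n = \<zero>) \<and> Z n n = \<one>"
proof -
  let ?m = "Suc n"
  obtain Z u v where Z: "row_equiv R ?m Y Z" and uv: "u \<in> carrier R" "v \<in> carrier R"
    and "u \<otimes> Z 0 n \<oplus> v \<otimes> Z 1 n = \<one>"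
    using row_equiv_last_col_first_two[OF assms] by blast
  have Z_mat: "is_mat R ?m Z"
    using is_mat_row_equiv[OF Y Z] .
  define e where "e = \<one> \<ominus> Z n n"
  have e: "e \<in> carrier R"
    using Z_mat by (simp add: e_def)
  define Z\<^sub>1 where "Z\<^sub>1 = (\<lambda>k l. if k = n \<and> l < ?m then Z n l \<oplus> (e \<otimes> u) \<otimes> Z 0 l else Z k l)"
  have Z\<^sub>1: "row_equiv R ?m Z Z\<^sub>1"
    unfolding Z\<^sub>1_def using \<open>2 \<le> n\<close> e uv by (intro row_equiv_add_row[OF Z_mat]) auto
  have Z\<^sub>1_mat: "is_mat R ?m Z\<^sub>1"
    using is_mat_row_equiv[OF Z_mat Z\<^sub>1] .
  define Z\<^sub>2 where "Z\<^sub>2 = (\<lambda>k l. if k = n \<and> l < ?m then Z\<^sub>1 n l \<oplus> (e \<otimes> v) \<otimes> Z\<^sub>1 1 l else Z\<^sub>1 k l)"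
  have Z\<^sub>2: "row_equiv R ?m Z\<^sub>1 Z\<^sub>2"
    unfolding Z\<^sub>2_def using \<open>2 \<le> n\<close> e uv by (intro row_equiv_add_row[OF Z\<^sub>1_mat]) auto
  have carrier: "Z n n \<in> carrier R" "Z 0 n \<in> carrier R" "Z 1 n \<in> carrier R"
    using Z_mat by auto
  have "Z\<^sub>2 n n = Z n n \<oplus> (e \<otimes> u) \<otimes> Z 0 n \<oplus> (e \<otimes> v) \<otimes> Z 1 n"
    using \<open>2 \<le> n\<close> by (simp add: Z\<^sub>2_def Z\<^sub>1_def)
  also have "\<dots> = Z n n \<oplus> e \<otimes> (u \<otimes> Z 0 n \<oplus> v \<otimes> Z 1 n)"
    using carrier e uv by algebra
  also have "\<dots> = \<one>"
    unfolding \<open>u \<otimes> Z 0 n \<oplus> v \<otimes> Z 1 n = \<one>\<close> e_def using carrier by algebra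
  finally obtain W where W: "row_equiv R ?m Z\<^sub>2 W" "\<forall>k<n. W k n = \<zero>" "W n n = \<one>"
    using row_equiv_clear_last_col[OF is_mat_row_equiv[OF Z\<^sub>1_mat Z\<^sub>2]] by blast
  have "row_equiv R ?m Y Z\<^sub>2"
    using row_equiv_trans[OF Y row_equiv_trans[OF Y Z Z\<^sub>1] Z\<^sub>2] .
  then show ?thesis
    using row_equiv_trans[OF Y _ W(1)] W(2,3) by blast
qed

end

definition mat2 :: "('a, 'b) ring_scheme \<Rightarrow> 'a \<Rightarrow> 'a \<Rightarrow> 'a \<Rightarrow> 'a \<Rightarrow> nat \<Rightarrow> nat \<Rightarrow> 'a" where
  "mat2 R a b c d = (\<lambda>i j. if i = 0 \<and> j = 0 then a else if i = 0 \<and> j = 1 then b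
     else if i = 1 \<and> j = 0 then c else if i = 1 \<and> j = 1 then d else idm R i j)"

context cring
begin

lemma is_mat_mat2:
  "a \<in> carrier R \<Longrightarrow> b \<in> carrier R \<Longrightarrow> c \<in> carrier R \<Longrightarrow> d \<in> carrier R \<Longrightarrow> is_mat R 2 (mat2 R a b c d)"
  by (auto simp: is_mat_def mat2_def)

lemma det_mat2:
  "a \<in> carrier R \<Longrightarrow> b \<in> carrier R \<Longrightarrow> c \<in> carrier R \<Longrightarrow> d \<in> carrier R \<Longrightarrow>
    det R 2 (mat2 R a b c d) = a \<otimes> d \<ominus> b \<otimes> c"
  using det_2[of "mat2 R a b c d"] is_mat_mat2[of a b c d] by (simp add: mat2_def)

lemma mat2_eta: "is_mat R 2 A \<Longrightarrow> mat2 R (A 0 0) (A 0 1) (A 1 0) (A 1 1) = A"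
  by (intro ext) (auto simp: mat2_def is_mat_def)

lemma elem_mat_mult_mat2:
  "x \<in> carrier R \<Longrightarrow> a \<in> carrier R \<Longrightarrow> b \<in> carrier R \<Longrightarrow> c \<in> carrier R \<Longrightarrow> d \<in> carrier R \<Longrightarrow>
    mat_mult R 2 (elem R 0 1 x) (mat2 R a b c d) = mat2 R (a \<oplus> x \<otimes> c) (b \<oplus> x \<otimes> d) c d"
  by (simp add: elem_mat_mult is_mat_mat2) (auto simp: mat2_def fun_eq_iff)

lemma unimodular_SL_2_second_row:
  assumes "A \<in> SL R 2"
  shows "unimodular R 2 (\<lambda>j. A 1 j)"
proof -
  have A: "is_mat R 2 A" "A 0 0 \<otimes> A 1 1 \<ominus> A 0 1 \<otimes> A 1 0 = \<one>"
    using assms det_2[of A] by (auto simp: SL_def)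
  have carrier: "A 0 0 \<in> carrier R" "A 0 1 \<in> carrier R" "A 1 0 \<in> carrier R" "A 1 1 \<in> carrier R"
    using A(1) by auto
  then have "(\<ominus> A 0 1) \<otimes> A 1 0 \<oplus> A 0 0 \<otimes> A 1 1 = A 0 0 \<otimes> A 1 1 \<ominus> A 0 1 \<otimes> A 1 0"
    by algebra
  then have "(\<ominus> A 0 1) \<otimes> A 1 0 \<oplus> A 0 0 \<otimes> A 1 1 = \<one>"
    using A(2) by simp
  moreover have "\<ominus> A 0 1 \<in> carrier R"
    using carrier by simp
  ultimately show ?thesis
    unfolding unimodular_2_iff using carrier by blast
qed

lemma mat2_SL:
  assumes "p \<in> carrier R" "q \<in> carrier R" "c \<in> carrier R" "d \<in> carrier R"
    and "p \<otimes> c \<oplus> q \<otimes> d = \<one>"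
  shows "mat2 R q (\<ominus> p) c d \<in> SL R 2"
proof -
  have "q \<otimes> d \<ominus> (\<ominus> p) \<otimes> c = p \<otimes> c \<oplus> q \<otimes> d"
    using assms by algebra
  then show ?thesis
    using assms by (simp add: SL_def is_mat_mat2 det_mat2)
qed

lemma row_equiv_mat2_second_row:
  assumes carrier: "a \<in> carrier R" "b \<in> carrier R" "c \<in> carrier R" "d \<in> carrier R"
    "p \<in> carrier R" "q \<in> carrier R"
    and det: "a \<otimes> d \<ominus> b \<otimes> c = \<one>" and pq: "p \<otimes> c \<oplus> q \<otimes> d = \<one>"
  shows "row_equiv R 2 (mat2 R q (\<ominus> p) c d) (mat2 R a b c d)"
proof -
  define x where "x = a \<otimes> p \<oplus> b \<otimes> q"
  have "q \<oplus> x \<otimes> c = q \<otimes> (\<one> \<ominus> (a \<otimes> d \<ominus> b \<otimes> c)) \<oplus> a \<otimes> (p \<otimes> c \<oplus> q \<otimes> d)"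
    "\<ominus> p \<oplus> x \<otimes> d = p \<otimes> (a \<otimes> d \<ominus> b \<otimes> c) \<ominus> p \<oplus> b \<otimes> (p \<otimes> c \<oplus> q \<otimes> d)"
    unfolding x_def using carrier by algebra+
  then have a: "q \<oplus> x \<otimes> c = a" and b: "\<ominus> p \<oplus> x \<otimes> d = b"
    unfolding det pq using carrier by (simp_all add: minus_eq r_neg)
  have "mat_mult R 2 (elem R 0 1 x) (mat2 R q (\<ominus> p) c d) = mat2 R (q \<oplus> x \<otimes> c) (\<ominus> p \<oplus> x \<otimes> d) c d"
    using carrier by (intro elem_mat_mult_mat2) (auto simp: x_def)
  then have "mat_mult R 2 (elem R 0 1 x) (mat2 R q (\<ominus> p) c d) = mat2 R a b c d"
    unfolding a b .
  moreover have "elem R 0 1 x \<in> elem_products R 2"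
    using carrier by (intro elem_in_elem_products) (auto simp: x_def)
  ultimately show ?thesis
    unfolding row_equiv_def by metis
qed

end

section \<open>Reduction modulo an ideal\<close>

locale cring_ideal = cring R + ideal I R for R (structure) and I

sublocale cring_ideal \<subseteq> Q: cring "R Quot I"
  by (rule quotient_is_cring[OF is_cring])

sublocale cring_ideal \<subseteq> proj: ring_hom_cring R "R Quot I" "(+>) I"
  by (rule rcos_ring_hom_cring[OF is_cring])

context cring_ideal
begin

lemma rcos_surj: "y \<in> carrier (R Quot I) \<Longrightarrow> \<exists>x\<in>carrier R. I +> x = y"
  unfolding FactRing_def A_RCOSETS_def' by auto

definition lift :: "'a set \<Rightarrow> 'a" where
  "lift y = (SOME x. x \<in> carrier R \<and> I +> x = y)"

lemma lift_closed: "y \<in> carrier (R Quot I) \<Longrightarrow> lift y \<in> carrier R"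
  unfolding lift_def using rcos_surj by (rule someI2_bex) auto

lemma rcos_lift: "y \<in> carrier (R Quot I) \<Longrightarrow> I +> lift y = y"
  unfolding lift_def using rcos_surj by (rule someI2_bex) auto

lemma reduce_idm: "reduce R I (idm R) = idm (R Quot I)"
  by (intro ext) (simp add: reduce_def idm_def)

lemma is_mat_reduce: "is_mat R n A \<Longrightarrow> is_mat (R Quot I) n (reduce R I A)"
  unfolding is_mat_def by (auto simp: reduce_def idm_def)

lemma reduce_mat_mult:
  assumes A: "is_mat R n A" and B: "is_mat R n B"
  shows "reduce R I (mat_mult R n A B) = mat_mult (R Quot I) n (reduce R I A) (reduce R I B)"
proof (intro ext)
  fix i j
  show "reduce R I (mat_mult R n A B) i j = mat_mult (R Quot I) n (reduce R I A) (reduce R I B) i j"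
  proof (cases "i < n \<and> j < n")
    case True
    then show ?thesis
      using A B by (simp add: reduce_def mat_mult_inside Q.mat_mult_inside Pi_def comp_def)
  next
    case False
    then show ?thesis
      by (simp add: reduce_def mat_mult_outside Q.mat_mult_outside idm_def)
  qed
qed

lemma reduce_elem: "a \<in> carrier R \<Longrightarrow> reduce R I (elem R i j a) = elem (R Quot I) i j (I +> a)"
  by (intro ext) (simp add: reduce_def elem_def idm_def)

lemma reduce_mat2:
  "a \<in> carrier R \<Longrightarrow> b \<in> carrier R \<Longrightarrow> c \<in> carrier R \<Longrightarrow> d \<in> carrier R \<Longrightarrow>
    reduce R I (mat2 R a b c d) = mat2 (R Quot I) (I +> a) (I +> b) (I +> c) (I +> d)"
  by (intro ext) (simp add: reduce_def mat2_def idm_def)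

lemma det_reduce:
  assumes A: "\<And>i j. A i j \<in> carrier R"
  shows "det (R Quot I) n (reduce R I A) = I +> det R n A"
proof -
  have "I +> (perm_sign p \<otimes> (\<Otimes>i\<in>{..<n}. A i (p i)))
      = Q.perm_sign p \<otimes>\<^bsub>R Quot I\<^esub> (\<Otimes>\<^bsub>R Quot I\<^esub>i\<in>{..<n}. reduce R I A i (p i))" for p
    using A by (simp add: perm_sign_def Q.perm_sign_def reduce_def Pi_def comp_def finprod_closed
        proj.hom_finprod)
  then show ?thesis
    using A by (simp add: det_perm_sign Q.det_perm_sign Pi_def comp_def finprod_closed
        del: proj.hom_mult)
qed

lemma reduce_SL: "A \<in> SL R n \<Longrightarrow> reduce R I A \<in> SL (R Quot I) n"
  using det_reduce[of A n] is_mat_reduce[of n A] by (auto simp: SL_def)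

lemma reduce_elem_products:
  "g \<in> elem_products R n \<Longrightarrow> reduce R I g \<in> elem_products (R Quot I) n"
proof (induction rule: elem_products.induct)
  case idm
  then show ?case by (simp add: reduce_idm elem_products.idm)
next
  case (elem_mult i j a g)
  then show ?case
    by (simp add: reduce_mat_mult reduce_elem is_mat_elem_products elem_products.elem_mult)
qed

lemma rcos_finsum:
  assumes "\<And>i. i < n \<Longrightarrow> f i \<in> carrier R"
  shows "I +> (\<Oplus>i\<in>{..<n}. f i) = (\<Oplus>\<^bsub>R Quot I\<^esub>i\<in>{..<n}. I +> f i)"
  using assms proj.hom_finsum[of f "{..<n}"] by (simp add: Pi_def comp_def)

lemma unimodular_reduce: "unimodular R n r \<Longrightarrow> unimodular (R Quot I) n (\<lambda>i. I +> r i)"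
proof (elim unimodularE)
  fix s assume r: "\<And>i. i < n \<Longrightarrow> r i \<in> carrier R" and s: "\<And>i. i < n \<Longrightarrow> s i \<in> carrier R"
    and sum: "(\<Oplus>i\<in>{..<n}. s i \<otimes> r i) = \<one>"
  have "\<one>\<^bsub>R Quot I\<^esub> = (\<Oplus>\<^bsub>R Quot I\<^esub>i\<in>{..<n}. I +> (s i \<otimes> r i))"
    using rcos_finsum[of n "\<lambda>i. s i \<otimes> r i"] r s by (simp add: sum)
  also have "\<dots> = (\<Oplus>\<^bsub>R Quot I\<^esub>i\<in>{..<n}. (I +> s i) \<otimes>\<^bsub>R Quot I\<^esub> (I +> r i))"
    using r s by (intro Q.finsum_lessThan_cong) auto
  finally show ?thesis
    using r s by (intro Q.unimodularI[where s = "\<lambda>i. I +> s i"]) auto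
qed

text \<open>The last entry \<open>1 - \<Sum> w i r' i\<close> of the lift absorbs the error made by lifting the
  relation \<open>\<Sum> s i r i + t = 1\<close> from \<open>R/I\<close> to \<open>R\<close>.\<close>

lemma unimodular_Quot_lift_last:
  assumes r: "\<And>i. i < n \<Longrightarrow> r i \<in> carrier (R Quot I)" and s: "\<And>i. i < n \<Longrightarrow> s i \<in> carrier (R Quot I)"
    and t: "t \<in> carrier (R Quot I)"
    and sum: "(\<Oplus>\<^bsub>R Quot I\<^esub>i\<in>{..<n}. s i \<otimes>\<^bsub>R Quot I\<^esub> r i) \<oplus>\<^bsub>R Quot I\<^esub> t = \<one>\<^bsub>R Quot I\<^esub>"
  shows "\<exists>r'. unimodular R (Suc n) r' \<and> (\<forall>i<n. I +> r' i = r i) \<and> I +> r' n = t"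
proof -
  define w where "w i = lift (s i)" for i
  define L where "L = (\<Oplus>i\<in>{..<n}. w i \<otimes> lift (r i))"
  define r' where "r' = (\<lambda>i. lift (r i))(n := \<one> \<ominus> L)"
  have r_lift: "lift (r i) \<in> carrier R" "I +> lift (r i) = r i" if "i < n" for i
    using r[OF that] lift_closed rcos_lift by auto
  have w: "w i \<in> carrier R" "I +> w i = s i" if "i < n" for i
    using s[OF that] lift_closed rcos_lift by (auto simp: w_def)
  have L: "L \<in> carrier R"
    using r_lift w by (simp add: L_def Pi_def finsum_closed)
  have "I +> L = (\<Oplus>\<^bsub>R Quot I\<^esub>i\<in>{..<n}. I +> (w i \<otimes> lift (r i)))"
    unfolding L_def using r_lift w by (intro rcos_finsum) auto
  also have "\<dots> = (\<Oplus>\<^bsub>R Quot I\<^esub>i\<in>{..<n}. s i \<otimes>\<^bsub>R Quot I\<^esub> r i)"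
    using r_lift w r s by (intro Q.finsum_lessThan_cong) auto
  finally have L_red: "I +> L = (\<Oplus>\<^bsub>R Quot I\<^esub>i\<in>{..<n}. s i \<otimes>\<^bsub>R Quot I\<^esub> r i)" .
  have sum_closed: "(\<Oplus>\<^bsub>R Quot I\<^esub>i\<in>{..<n}. s i \<otimes>\<^bsub>R Quot I\<^esub> r i) \<in> carrier (R Quot I)"
    using r s by (simp add: Pi_def Q.finsum_closed)
  have "I +> (\<one> \<ominus> L) = \<one>\<^bsub>R Quot I\<^esub> \<oplus>\<^bsub>R Quot I\<^esub>
      \<ominus>\<^bsub>R Quot I\<^esub> (\<Oplus>\<^bsub>R Quot I\<^esub>i\<in>{..<n}. s i \<otimes>\<^bsub>R Quot I\<^esub> r i)"
    using L L_red by (simp add: minus_eq)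
  also have "\<dots> = t"
    using Q.add.inv_solve_right'[OF t Q.one_closed sum_closed] sum Q.a_comm[OF t sum_closed] by simp
  finally have t_lift: "I +> (\<one> \<ominus> L) = t" .
  have "(\<Oplus>i\<in>{..<Suc n}. (w(n := \<one>)) i \<otimes> r' i)
      = \<one> \<otimes> (\<one> \<ominus> L) \<oplus> (\<Oplus>i\<in>{..<n}. (w(n := \<one>)) i \<otimes> r' i)"
    unfolding r'_def using r_lift w L by (subst finsum_lessThan_Suc) auto
  also have "(\<Oplus>i\<in>{..<n}. (w(n := \<one>)) i \<otimes> r' i) = L"
    unfolding L_def r'_def using r_lift w by (intro finsum_lessThan_cong) auto
  also have "\<one> \<otimes> (\<one> \<ominus> L) \<oplus> L = \<one>"
    using L by (simp add: minus_eq a_assoc l_neg)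
  finally have "unimodular R (Suc n) r'"
    using r_lift w L by (intro unimodularI[where s = "w(n := \<one>)"]) (auto simp: r'_def)
  moreover have "I +> r' n = t"
    using t_lift by (simp add: r'_def)
  moreover have "\<forall>i<n. I +> r' i = r i"
    using r_lift by (simp add: r'_def)
  ultimately show ?thesis
    by blast
qed

lemma sr_cond_Quot:
  assumes "sr_cond R n"
  shows "sr_cond (R Quot I) n"
  unfolding sr_cond_def
proof (intro allI impI)
  fix r assume "unimodular (R Quot I) (Suc n) r"
  then obtain s where r: "\<And>i. i < Suc n \<Longrightarrow> r i \<in> carrier (R Quot I)"
    and s: "\<And>i. i < Suc n \<Longrightarrow> s i \<in> carrier (R Quot I)"
    and "(\<Oplus>\<^bsub>R Quot I\<^esub>i\<in>{..<Suc n}. s i \<otimes>\<^bsub>R Quot I\<^esub> r i) = \<one>\<^bsub>R Quot I\<^esub>"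
    by (rule Q.unimodularE) blast
  then have "(\<Oplus>\<^bsub>R Quot I\<^esub>i\<in>{..<n}. s i \<otimes>\<^bsub>R Quot I\<^esub> r i) \<oplus>\<^bsub>R Quot I\<^esub> s n \<otimes>\<^bsub>R Quot I\<^esub> r n = \<one>\<^bsub>R Quot I\<^esub>"
    by (simp add: Q.finsum_lessThan_Suc Q.a_comm Pi_def Q.finsum_closed)
  then obtain r' where r': "unimodular R (Suc n) r'" "\<forall>i<n. I +> r' i = r i"
    "I +> r' n = s n \<otimes>\<^bsub>R Quot I\<^esub> r n"
    using unimodular_Quot_lift_last[of n r s "s n \<otimes>\<^bsub>R Quot I\<^esub> r n"] r s by auto
  then have "stable_row R n r'"
    using assms by (simp add: sr_cond_def)
  then obtain s' where s': "\<And>i. i < n \<Longrightarrow> s' i \<in> carrier R"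
    and unimodular_s': "unimodular R n (\<lambda>i. r' i \<oplus> s' i \<otimes> r' n)"
    unfolding stable_row_def by blast
  have eq: "r i \<oplus>\<^bsub>R Quot I\<^esub> ((I +> s' i) \<otimes>\<^bsub>R Quot I\<^esub> s n) \<otimes>\<^bsub>R Quot I\<^esub> r n
      = I +> (r' i \<oplus> s' i \<otimes> r' n)" if "i < n" for i
    using that r' s' r s unfolding unimodular_def by (simp add: Q.m_assoc)
  show "stable_row (R Quot I) n r"
    unfolding stable_row_def
  proof (intro exI conjI)
    show "\<forall>i<n. (I +> s' i) \<otimes>\<^bsub>R Quot I\<^esub> s n \<in> carrier (R Quot I)"
      using s' s by simp
    show "unimodular (R Quot I) n (\<lambda>i. r i \<oplus>\<^bsub>R Quot I\<^esub> ((I +> s' i) \<otimes>\<^bsub>R Quot I\<^esub> s n) \<otimes>\<^bsub>R Quot I\<^esub> r n)"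
      using eq by (rule Q.unimodular_cong[OF unimodular_reduce[OF unimodular_s']])
  qed
qed

lemma unimodular_Quot_lift:
  assumes "sr_cond R n" "unimodular (R Quot I) n r"
  obtains r' where "unimodular R n r'" "\<And>i. i < n \<Longrightarrow> I +> r' i = r i"
proof -
  obtain s where r: "\<And>i. i < n \<Longrightarrow> r i \<in> carrier (R Quot I)"
    and s: "\<And>i. i < n \<Longrightarrow> s i \<in> carrier (R Quot I)"
    and "(\<Oplus>\<^bsub>R Quot I\<^esub>i\<in>{..<n}. s i \<otimes>\<^bsub>R Quot I\<^esub> r i) = \<one>\<^bsub>R Quot I\<^esub>"
    using assms(2) by (rule Q.unimodularE) blast
  then obtain r' where r': "unimodular R (Suc n) r'" "\<forall>i<n. I +> r' i = r i"
    "I +> r' n = \<zero>\<^bsub>R Quot I\<^esub>"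
    using unimodular_Quot_lift_last[of n r s "\<zero>\<^bsub>R Quot I\<^esub>"] r s
    by (auto simp: Pi_def Q.finsum_closed)
  then have "stable_row R n r'"
    using assms(1) by (simp add: sr_cond_def)
  then obtain s' where s': "\<And>i. i < n \<Longrightarrow> s' i \<in> carrier R"
    and unimodular_s': "unimodular R n (\<lambda>i. r' i \<oplus> s' i \<otimes> r' n)"
    unfolding stable_row_def by blast
  have "I +> (r' i \<oplus> s' i \<otimes> r' n) = r i" if "i < n" for i
    using that r' s' r unfolding unimodular_def by simp
  with unimodular_s' show ?thesis
    by (rule that)
qed

lemma SL_Quot_lift_2:
  assumes "sr_cond R 2" and b: "b \<in> SL (R Quot I) 2"
  shows "\<exists>A\<in>SL R 2. row_equiv (R Quot I) 2 (reduce R I A) b"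
proof -
  obtain r' where "unimodular R 2 r'" and red: "\<And>j. j < 2 \<Longrightarrow> I +> r' j = b 1 j"
    using assms(1) Q.unimodular_SL_2_second_row[OF b] by (rule unimodular_Quot_lift) blast
  then obtain p q where carrier: "r' 0 \<in> carrier R" "r' 1 \<in> carrier R" "p \<in> carrier R" "q \<in> carrier R"
    and pq: "p \<otimes> r' 0 \<oplus> q \<otimes> r' 1 = \<one>"
    unfolding unimodular_2_iff by blast
  have b_mat: "is_mat (R Quot I) 2 b"
    using b by (simp add: SL_def)
  have "reduce R I (mat2 R q (\<ominus> p) (r' 0) (r' 1))
      = mat2 (R Quot I) (I +> q) (\<ominus>\<^bsub>R Quot I\<^esub> (I +> p)) (b 1 0) (b 1 1)"
    using carrier red[of 0] red[of 1] by (simp add: reduce_mat2)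
  moreover have "(I +> p) \<otimes>\<^bsub>R Quot I\<^esub> b 1 0 \<oplus>\<^bsub>R Quot I\<^esub> (I +> q) \<otimes>\<^bsub>R Quot I\<^esub> b 1 1 = \<one>\<^bsub>R Quot I\<^esub>"
    using carrier red[of 0] red[of 1] arg_cong[OF pq, of "(+>) I"] by simp
  moreover have "b 0 0 \<otimes>\<^bsub>R Quot I\<^esub> b 1 1 \<ominus>\<^bsub>R Quot I\<^esub> b 0 1 \<otimes>\<^bsub>R Quot I\<^esub> b 1 0 = \<one>\<^bsub>R Quot I\<^esub>"
    using b Q.det_2[OF Q.is_mat_closed[OF b_mat]] by (simp add: SL_def)
  ultimately have "row_equiv (R Quot I) 2 (reduce R I (mat2 R q (\<ominus> p) (r' 0) (r' 1))) b"
    using Q.row_equiv_mat2_second_row[of "b 0 0" "b 0 1" "b 1 0" "b 1 1" "I +> p" "I +> q"]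
      carrier b_mat Q.mat2_eta[OF b_mat] by simp
  then show ?thesis
    using mat2_SL[OF carrier(3,4,1,2) pq] by blast
qed

lemma SL_Quot_lift_Suc:
  assumes "sr_cond R 2" "2 \<le> n"
    and IH: "\<And>b'. b' \<in> SL (R Quot I) n \<Longrightarrow> \<exists>A\<in>SL R n. row_equiv (R Quot I) n (reduce R I A) b'"
    and b: "b \<in> SL (R Quot I) (Suc n)"
  shows "\<exists>A\<in>SL R (Suc n). row_equiv (R Quot I) (Suc n) (reduce R I A) b"
proof -
  have b_mat: "is_mat (R Quot I) (Suc n) b" and det_b: "det (R Quot I) (Suc n) b = \<one>\<^bsub>R Quot I\<^esub>"
    using b by (auto simp: SL_def)
  obtain Z where bZ: "row_equiv (R Quot I) (Suc n) b Z"
    and Z: "\<forall>k<n. Z k n = \<zero>\<^bsub>R Quot I\<^esub>" "Z n n = \<one>\<^bsub>R Quot I\<^esub>"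
    using Q.row_equiv_last_col_unit[OF sr_cond_Quot[OF assms(1)] b_mat assms(2)
        Q.unimodular_last_col[OF b_mat det_b]] by blast
  have Z_mat: "is_mat (R Quot I) (Suc n) Z"
    using Q.is_mat_row_equiv[OF b_mat bZ] .
  have "det (R Quot I) (Suc n) Z = \<one>\<^bsub>R Quot I\<^esub>"
    using Q.det_row_equiv[OF b_mat bZ] det_b by simp
  then obtain A' where A': "A' \<in> SL R n"
    and "row_equiv (R Quot I) n (reduce R I A') (\<lambda>i j. if i < n \<and> j < n then Z i j else idm (R Quot I) i j)"
    using IH Q.SL_upper_block[OF Z_mat Z] by blast
  then have "row_equiv (R Quot I) (Suc n) (\<lambda>i j. if i = n \<and> j < n then Z n j else reduce R I A' i j) Z"
    using Q.row_equiv_Suc_last_row[OF Z_mat Z is_mat_reduce] by (simp add: SL_def)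
  moreover define A where "A = (\<lambda>i j. if i = n \<and> j < n then lift (Z n j) else A' i j)"
  moreover have "reduce R I A = (\<lambda>i j. if i = n \<and> j < n then Z n j else reduce R I A' i j)"
    using Z_mat rcos_lift by (intro ext) (simp add: A_def reduce_def)
  moreover have A: "A \<in> SL R (Suc n)"
    unfolding A_def using Z_mat lift_closed by (intro SL_Suc_last_row[OF A'(1)]) auto
  ultimately have "row_equiv (R Quot I) (Suc n) (reduce R I A) Z"
    by simp
  then have "row_equiv (R Quot I) (Suc n) (reduce R I A) b"
    using Q.row_equiv_trans[OF _ _ Q.row_equiv_sym[OF b_mat bZ]] is_mat_reduce A by (simp add: SL_def)
  with A show ?thesis
    by blast
qed

lemma SL_Quot_lift:
  assumes "sr_cond R 2" "b \<in> SL (R Quot I) m"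
  shows "\<exists>A\<in>SL R m. row_equiv (R Quot I) m (reduce R I A) b"
  using assms(2)
proof (induction m arbitrary: b rule: less_induct)
  case (less m)
  have "m \<le> 1 \<or> m = 2 \<or> m = Suc (m - 1) \<and> 2 \<le> m - 1"
    by arith
  then consider "m \<le> 1" | "m = 2" | n where "m = Suc n" "2 \<le> n"
    by blast
  then show ?case
  proof cases
    case 1
    then have "b = idm (R Quot I)"
      using less.prems by (rule Q.SL_le_1)
    moreover have "idm R \<in> SL R m"
      by (simp add: SL_def)
    ultimately show ?thesis
      using Q.row_equiv_refl[OF Q.is_mat_idm] by (metis reduce_idm)
  next
    case 2
    then show ?thesis
      using SL_Quot_lift_2[OF assms(1)] less.prems by simp
  next
    case 3
    then show ?thesis
      using SL_Quot_lift_Suc[OF assms(1) \<open>2 \<le> n\<close> less.IH] less.prems by simp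
  qed
qed

end

section \<open>Elementary cosets and \<open>SK\<^sub>1\<close>\<close>

context cring
begin

lemma r_coset_SL_stab: "H #>\<^bsub>SL_stab R\<^esub> a = {stab_mult R h a | h. h \<in> H}"
  by (auto simp: r_coset_def SL_stab_def)

lemma E_all_coset:
  assumes y: "y \<in> SL R N"
  shows "E_all R #>\<^bsub>SL_stab R\<^esub> y = {mat_mult R M h y | M h. N \<le> M \<and> h \<in> elem_products R M}"
proof (intro equalityI subsetI)
  fix z assume "z \<in> E_all R #>\<^bsub>SL_stab R\<^esub> y"
  then obtain h N' where h: "h \<in> elem_products R N'" "z = stab_mult R h y"
    by (auto simp: r_coset_SL_stab E_all_eq)
  define M where "M = max N N'"
  have "h \<in> elem_products R M" "y \<in> SL R M"
    using elem_products_mono[OF h(1)] SL_mono[OF y] by (simp_all add: M_def)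
  then have "z = mat_mult R M h y"
    using h(2) by (simp add: stab_mult_eq_mat_mult elem_products_SL)
  moreover have "N \<le> M"
    by (simp add: M_def)
  ultimately show "z \<in> {mat_mult R M h y | M h. N \<le> M \<and> h \<in> elem_products R M}"
    using \<open>h \<in> elem_products R M\<close> by blast
next
  fix z assume "z \<in> {mat_mult R M h y | M h. N \<le> M \<and> h \<in> elem_products R M}"
  then obtain M h where "N \<le> M" and h: "h \<in> elem_products R M" and "z = mat_mult R M h y"
    by blast
  then have "z = stab_mult R h y"
    using stab_mult_eq_mat_mult[OF elem_products_SL[OF h] SL_mono[OF y]] by simp
  moreover have "h \<in> E_all R"
    using h by (auto simp: E_all_eq)
  ultimately show "z \<in> E_all R #>\<^bsub>SL_stab R\<^esub> y"
    by (auto simp: r_coset_SL_stab)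
qed

lemma E_all_coset_row_equiv_subset:
  assumes y: "y \<in> SL R N" and "row_equiv R N y z"
  shows "E_all R #>\<^bsub>SL_stab R\<^esub> z \<subseteq> E_all R #>\<^bsub>SL_stab R\<^esub> y"
proof -
  obtain g where g: "g \<in> elem_products R N" "z = mat_mult R N g y"
    using assms(2) by (auto simp: row_equiv_def)
  have z: "z \<in> SL R N"
    using g y by (simp add: elem_products_mult_SL)
  have coset: "mat_mult R M h z \<in> E_all R #>\<^bsub>SL_stab R\<^esub> y" if "N \<le> M" "h \<in> elem_products R M" for M h
  proof -
    have g_M: "g \<in> elem_products R M" and y_M: "is_mat R M y"
      using that elem_products_mono[OF g(1)] SL_mono[OF y] by (auto simp: SL_def)
    have "z = mat_mult R M g y"
      using g(2) mat_mult_size_indep[OF is_mat_elem_products[OF g(1)] _ that(1), of y] y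
      by (simp add: SL_def)
    then have "mat_mult R M h z = mat_mult R M (mat_mult R M h g) y"
      using that(2) g_M y_M by (simp add: mat_mult_assoc is_mat_elem_products)
    moreover have "mat_mult R M h g \<in> elem_products R M"
      using that(2) g_M by (rule elem_products_mult)
    ultimately show ?thesis
      unfolding E_all_coset[OF y] using that(1)
      by (intro CollectI exI[of _ M] exI[of _ "mat_mult R M h g"]) simp
  qed
  show ?thesis
    unfolding E_all_coset[OF z] using coset by auto
qed

lemma E_all_coset_row_equiv:
  assumes y: "y \<in> SL R N" and yz: "row_equiv R N y z"
  shows "E_all R #>\<^bsub>SL_stab R\<^esub> z = E_all R #>\<^bsub>SL_stab R\<^esub> y"
proof -
  obtain g where "g \<in> elem_products R N" "z = mat_mult R N g y"
    using yz by (auto simp: row_equiv_def)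
  then have z: "z \<in> SL R N"
    using y by (simp add: elem_products_mult_SL)
  have zy: "row_equiv R N z y"
    using row_equiv_sym[OF _ yz] y by (simp add: SL_def)
  show ?thesis
    using E_all_coset_row_equiv_subset[OF y yz] E_all_coset_row_equiv_subset[OF z zy]
    by (rule equalityI)
qed

lemma carrier_SK1: "carrier (SK1 R) = (\<lambda>A. E_all R #>\<^bsub>SL_stab R\<^esub> A) ` SL_all R"
  by (auto simp: SK1_def FactGroup_def RCOSETS_def SL_stab_def)

end

context cring_ideal
begin

text \<open>\<open>SK1_map\<close> reduces an arbitrary representative of the class; any two differ by an
  elementary factor, which reduces to an elementary factor.\<close>

lemma SK1_map_coset:
  assumes A: "A \<in> SL R n"
  shows "SK1_map R I (E_all R #>\<^bsub>SL_stab R\<^esub> A) = E_all (R Quot I) #>\<^bsub>SL_stab (R Quot I)\<^esub> reduce R I A"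
proof -
  let ?C = "E_all R #>\<^bsub>SL_stab R\<^esub> A"
  have "A \<in> ?C"
    unfolding E_all_coset[OF A] using A elem_products.idm
    by (intro CollectI exI[of _ n] exI[of _ "idm R"]) (simp add: SL_def)
  then have "(SOME A'. A' \<in> ?C) \<in> ?C"
    by (rule someI[of "\<lambda>A'. A' \<in> ?C"])
  then obtain M h where M: "n \<le> M" "h \<in> elem_products R M" and "(SOME A'. A' \<in> ?C) = mat_mult R M h A"
    unfolding E_all_coset[OF A] by blast
  then have "reduce R I (SOME A'. A' \<in> ?C) = mat_mult (R Quot I) M (reduce R I h) (reduce R I A)"
    using SL_mono[OF A M(1)] by (simp add: reduce_mat_mult is_mat_elem_products SL_def)
  then have "row_equiv (R Quot I) M (reduce R I A) (reduce R I (SOME A'. A' \<in> ?C))"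
    unfolding row_equiv_def using reduce_elem_products[OF M(2)] by blast
  then show ?thesis
    unfolding SK1_map_def using Q.E_all_coset_row_equiv reduce_SL[OF SL_mono[OF A M(1)]] by blast
qed

lemma SK1_map_image:
  "SK1_map R I ` carrier (SK1 R) = (\<lambda>A. E_all (R Quot I) #>\<^bsub>SL_stab (R Quot I)\<^esub> reduce R I A) ` SL_all R"
  unfolding carrier_SK1 image_image by (intro image_cong) (auto simp: SL_all_def SK1_map_coset)

lemma carrier_SK1_Quot:
  assumes "sr_cond R 2"
  shows "carrier (SK1 (R Quot I)) = (\<lambda>A. E_all (R Quot I) #>\<^bsub>SL_stab (R Quot I)\<^esub> reduce R I A) ` SL_all R"
  unfolding Q.carrier_SK1
proof (intro equalityI subsetI)
  fix Y assume "Y \<in> (\<lambda>b. E_all (R Quot I) #>\<^bsub>SL_stab (R Quot I)\<^esub> b) ` SL_all (R Quot I)"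
  then obtain b m where b: "b \<in> SL (R Quot I) m" "Y = E_all (R Quot I) #>\<^bsub>SL_stab (R Quot I)\<^esub> b"
    by (auto simp: SL_all_def)
  then obtain A where A: "A \<in> SL R m" "row_equiv (R Quot I) m (reduce R I A) b"
    using SL_Quot_lift[OF assms] by blast
  then have "Y = E_all (R Quot I) #>\<^bsub>SL_stab (R Quot I)\<^esub> reduce R I A"
    using b Q.E_all_coset_row_equiv[OF reduce_SL] by simp
  then show "Y \<in> (\<lambda>A. E_all (R Quot I) #>\<^bsub>SL_stab (R Quot I)\<^esub> reduce R I A) ` SL_all R"
    using A by (auto simp: SL_all_def)
qed (auto simp: SL_all_def intro: reduce_SL)

end

theorem mainTheorem4:
  fixes R :: "'a ring" and I :: "'a set"
  assumes "cring R"
    and "sr R \<le> 2"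
    and "ideal I R"
  shows "SK1_map R I ` carrier (SK1 R) = carrier (SK1 (FactRing R I))"
proof -
  interpret cring_ideal R I
    using assms(1,3) by (simp add: cring_ideal_def)
  have "sr_cond R 2"
    using assms(2) by (intro sr_cond_of_sr_le) (simp add: numeral_eq_enat)
  then show ?thesis
    by (simp add: SK1_map_image carrier_SK1_Quot)
qed

end
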